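(* Let $p\in(0,1)$, $N=1/(1-p)$, $r\ge0$ an integer and $n\ge0$ even. If $G=(U,w,w')$ is a melonic graph of order $n$, then $$\mathcal A_r(G)\le 4^{n}\,p^{r/2}.$$
   Context: Trees. A 2-rooted ternary tree of order $n$ is a finite plane tree $U$ with a root vertex of degree 2 and $n$ true vertices of degree 4; each edge is internal or a leaf (half-edge). Each true vertex $v$ has parent edge $e_1(v)$ (towards the root) and ordered children edges $e_2(v),e_3(v),e_4(v)$. One root edge has type $\alpha$, the other $\bar\alpha$; if $e_1(v)$ has type $\tau$ then $e_2(v)$ has the other type and $e_3(v),e_4(v)$ have type $\tau$. Leaves of type $\alpha$ are leaves, of type $\bar\alpha$ anti-leaves ($n+1$ each). A heap-ordering labels true vertices bijectively by $\{1,\dots,n\}$, increasing from parent to child. Graphs. For even $n$, a graph of order $n$ is $G=(U,w,w')$: $U$ heap-ordered; $w$ a bijection leaves $\to$ anti-leaves (dashed edges; internal edges are solid); $w'$ a partition of true vertices into $n/2$ pairs (wavy edges) with, for each pair $\{v,v'\}$ ($v$ of smaller label), one of eight propagators in $(S,j,k)=(S_v,j_v,k_v)$, $(S',j',k')=(S_{v'},j_{v'},k_{v'})$: $\delta_{jj'}\delta_{kk'}$, $\delta_{j,S-j'}\delta_{kk'}$, $\delta_{jj'}\delta_{k,S-k'}$, $\delta_{j,S-j'}\delta_{k,S-k'}$, $\delta_{jk'}\delta_{kj'}$, $\delta_{j,S-k'}\delta_{kj'}$, $\delta_{jk'}\delta_{k,S-j'}$, $\delta_{j,S-k'}\delta_{k,S-j'}$,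 together with $S=S'$. Amplitude. A momentum attribution gives each true vertex $S_v\ge0$, $0\le j_v,k_v\le S_v$ and momenta $j_v,S_v-j_v,k_v,S_v-k_v$ to the ends at $v$ of $e_1,\dots,e_4$. It is admissible (for root momentum $r$) if solid edges get equal momenta at both ends, both root edges carry momentum $r$, every dashed edge $e$ joins leaves of equal momentum $m(e)$, and every wavy edge satisfies $S_v=S_{v'}$ and its propagator. $\mathcal A_r(G):=N^{-n}\sum_{\text{admissible}}\prod_{e\text{ dashed}}p^{m(e)}$. Melonic graphs. Each propagator (with $S=S'$) induces a bijection from the edge-ends at $v$ to those at $v'$ (matching identified momenta). For two true vertices joined by three edges, the leading propagator is the one whose bijection maps the $v$-end of each joining edge to its $v'$-end. The trivial graph ($n=0$) is the root with a leaf and an anti-leaf joined by a dashed edge. A graph is melonic if (ignoring heap-orderings) it arises from the trivial graph by repeatedly inserting two new true vertices $v,v'$, joined to each other by three edges and by a wavy edge carrying the leading propagator, in one of these ways: (I) into a dashed edge $\{x,y\}$: $e_1(v)$ at $x$, $e_1(v')$ at $y$, dashed edges $e_2(v)$–$e_2(v')$ and $\{e_3(v),e_4(v)\}$ bijectively to $\{e_3(v'),e_4(v')\}$; (II) into a dashed edge $\{z,z'\}$: $e_1(v)$ at $z$, $e_1(v')=e_2(v)$, dashed edges $e_2(v')$–$z'$ and $\{e_3(v),e_4(v)\}$ bijectively to $\{e_3(v'),e_4(v')\}$; (III) into a dashed edge $\{z,z'\}$: $e_1(v)$ at $z$, $e_1(v')=e_a(v)$ ($a\in\{3,4\}$, $b$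 the other), dashed edges $e_2(v)$–(one of $e_3(v'),e_4(v')$), $e_b(v)$–$e_2(v')$, remaining child leaf of $v'$–$z'$; (IIs) into a solid edge from $u$ to child $z$: $v$ below $u$, $e_1(v')=e_2(v)$, $e_1(z)=e_2(v')$, dashed edges $\{e_3(v),e_4(v)\}$ bijectively to $\{e_3(v'),e_4(v')\}$; (IIIs) as (IIs) but $e_1(v')=e_a(v)$, $a\in\{3,4\}$, $e_1(z)=e_c(v')$, $c\in\{3,4\}$, dashed edges $e_2(v)$–(other of $e_3(v'),e_4(v')$) and $e_b(v)$–$e_2(v')$. *)

theory Defs
  imports "HOL-Analysis.Analysis"
begin

text \<open>RootA / RootB are the two root edges (of type alpha / anti-alpha);
  Ch u i (i in {2,3,4}) is the child edge e_i(u) of the true vertex u.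
  A true vertex v is attached through its parent edge e_1(v) to the slot gpar v.\<close>
datatype slot = RootA | RootB | Ch nat nat

record graph =
  gV    :: "nat set"
  gpar  :: "nat \<Rightarrow> slot"        \<comment> \<open>slot to which e_1(v) is attached\<close>
  gdash :: "slot \<Rightarrow> slot"       \<comment> \<open>dashed edges, as an involution on leaves (w together with w^-1)\<close>
  gmate :: "nat \<Rightarrow> nat"         \<comment> \<open>wavy edges: partner of v\<close>
  gprop :: "nat \<Rightarrow> nat"         \<comment> \<open>propagator index 0..7, stored at the smaller vertex of the pair\<close>

definition slots :: "graph \<Rightarrow> slot set" where
  "slots G = {RootA, RootB} \<union> {Ch u i | u i. u \<in> gV G \<and> i \<in> {2,3,4}}"

definition leaf_slots :: "graph \<Rightarrow> slot set" where
  "leaf_slots G = slots G - gpar G ` gV G"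

text \<open>Edge types: True = alpha, False = anti-alpha.\<close>
inductive sty :: "graph \<Rightarrow> slot \<Rightarrow> bool \<Rightarrow> bool" for G where
  "sty G RootA True"
| "sty G RootB False"
| "u \<in> gV G \<Longrightarrow> sty G (gpar G u) b \<Longrightarrow> sty G (Ch u 2) (\<not> b)"
| "u \<in> gV G \<Longrightarrow> sty G (gpar G u) b \<Longrightarrow> i \<in> {3,4} \<Longrightarrow> sty G (Ch u i) b"

definition lvs :: "graph \<Rightarrow> bool \<Rightarrow> slot set" where
  "lvs G b = {s \<in> leaf_slots G. sty G s b}"

definition is_graph :: "nat \<Rightarrow> graph \<Rightarrow> bool" where
  "is_graph n G \<longleftrightarrow>
     gV G = {1..n} \<and>
     (\<forall>v\<in>gV G. gpar G v \<in> slots G) \<and>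
     inj_on (gpar G) (gV G) \<and>
     (\<forall>v\<in>gV G. \<forall>u i. gpar G v = Ch u i \<longrightarrow> u < v) \<and>
     bij_betw (gdash G) (lvs G True) (lvs G False) \<and>
     (\<forall>x\<in>lvs G True. gdash G (gdash G x) = x) \<and>
     (\<forall>v\<in>gV G. gmate G v \<in> gV G \<and> gmate G v \<noteq> v \<and> gmate G (gmate G v) = v) \<and>
     (\<forall>v\<in>gV G. v < gmate G v \<longrightarrow> gprop G v < 8)"

text \<open>The eight propagators, for (S,j,k) at v (smaller label) and (S',j',k') at v'
  (the condition S = S' is imposed separately).\<close>
fun propc :: "nat \<Rightarrow> nat \<times> nat \<times> nat \<Rightarrow> nat \<times> nat \<times> nat \<Rightarrow> bool" where
  "propc t (S,j,k) (S',j',k') =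
    (if t = 0 then j = j' \<and> k = k'
     else if t = 1 then j = S - j' \<and> k = k'
     else if t = 2 then j = j' \<and> k = S - k'
     else if t = 3 then j = S - j' \<and> k = S - k'
     else if t = 4 then j = k' \<and> k = j'
     else if t = 5 then j = S - k' \<and> k = j'
     else if t = 6 then j = k' \<and> k = S - j'
     else if t = 7 then j = S - k' \<and> k = S - j'
     else False)"

text \<open>The bijection from the edge-ends e_1..e_4 at v to those at v' induced by
  propagator t (matching identified momenta j, S-j, k, S-k).\<close>
definition pbij :: "nat \<Rightarrow> nat \<Rightarrow> nat" where
  "pbij t i = [[1,2,3,4],[2,1,3,4],[1,2,4,3],[2,1,4,3],
               [3,4,1,2],[4,3,1,2],[3,4,2,1],[4,3,2,1]] ! t ! (i - 1)"

text \<open>Momentum attributions: mo v = (S_v, j_v, k_v).  Momentum at the end of e_i(v) at v.\<close>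
definition emom :: "(nat \<Rightarrow> nat \<times> nat \<times> nat) \<Rightarrow> nat \<Rightarrow> nat \<Rightarrow> nat" where
  "emom mo v i = (case mo v of (S,j,k) \<Rightarrow>
     if i = 1 then j else if i = 2 then S - j else if i = 3 then k else S - k)"

text \<open>Momentum of a slot at its upper end (root edges carry r).\<close>
fun smom :: "nat \<Rightarrow> (nat \<Rightarrow> nat \<times> nat \<times> nat) \<Rightarrow> slot \<Rightarrow> nat" where
  "smom r mo RootA = r"
| "smom r mo RootB = r"
| "smom r mo (Ch u i) = emom mo u i"

text \<open>Admissible attributions (normalised to (0,0,0) off the true vertices).\<close>
definition admissible :: "nat \<Rightarrow> graph \<Rightarrow> (nat \<Rightarrow> nat \<times> nat \<times> nat) set" where
  "admissible r G = {mo.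
     (\<forall>v. v \<notin> gV G \<longrightarrow> mo v = (0,0,0)) \<and>
     (\<forall>v\<in>gV G. case mo v of (S,j,k) \<Rightarrow> j \<le> S \<and> k \<le> S) \<and>
     (\<forall>v\<in>gV G. emom mo v 1 = smom r mo (gpar G v)) \<and>
     (\<forall>x\<in>lvs G True. smom r mo x = smom r mo (gdash G x)) \<and>
     (\<forall>v\<in>gV G. v < gmate G v \<longrightarrow>
        fst (mo v) = fst (mo (gmate G v)) \<and> propc (gprop G v) (mo v) (mo (gmate G v)))}"

text \<open>Amplitude A_r(G) = N^{-n} sum over admissible attributions of prod_{dashed e} p^{m(e)},
  with N = 1/(1-p); a sum of nonnegative terms, taken in ennreal.\<close>
definition amp :: "real \<Rightarrow> nat \<Rightarrow> graph \<Rightarrow> ennreal" where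
  "amp p r G = ennreal ((1 / (1 / (1 - p))) ^ card (gV G)) *
     (\<Sum>\<^sub>\<infinity>mo\<in>admissible r G. ennreal (\<Prod>x\<in>lvs G True. p ^ smom r mo x))"

definition fresh :: "graph \<Rightarrow> nat \<Rightarrow> nat \<Rightarrow> bool" where
  "fresh G v v' \<longleftrightarrow> v \<noteq> v' \<and> v \<notin> gV G \<and> v' \<notin> gV G"

definition keep_old :: "graph \<Rightarrow> graph \<Rightarrow> nat \<Rightarrow> nat \<Rightarrow> bool" where
  "keep_old G G' v v' \<longleftrightarrow>
     gV G' = insert v (insert v' (gV G)) \<and>
     (\<forall>u\<in>gV G. gmate G' u = gmate G u) \<and> gmate G' v = v' \<and> gmate G' v' = v \<and>
     (\<forall>u\<in>gV G. u < gmate G u \<longrightarrow> gprop G' u = gprop G u)"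

definition dpair :: "graph \<Rightarrow> slot \<Rightarrow> slot \<Rightarrow> bool" where
  "dpair G a b \<longleftrightarrow> gdash G a = b \<and> gdash G b = a"

text \<open>Leading propagator on the wavy edge {v,v'}: js lists, for each of the three
  edges joining v and v', the pair (index of its end at v, index of its end at v').
  The stored propagator acts from the smaller to the larger vertex.\<close>
definition lead :: "graph \<Rightarrow> nat \<Rightarrow> nat \<Rightarrow> (nat \<times> nat) list \<Rightarrow> bool" where
  "lead G v v' js \<longleftrightarrow> gprop G (min v v') < 8 \<and>
     (\<forall>(a,b)\<in>set js. if v < v' then pbij (gprop G v) a = b else pbij (gprop G v') b = a)"

definition sg :: "bool \<Rightarrow> nat \<Rightarrow> nat" where
  "sg sw a = (if sw then 7 - a else a)"

text \<open>Melonic graphs (heap-orderings ignored: the inserted vertices get arbitrary fresh names).\<close>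
inductive melonic :: "graph \<Rightarrow> bool" where
  trivial: "gV G = {} \<Longrightarrow> gdash G RootA = RootB \<Longrightarrow> gdash G RootB = RootA \<Longrightarrow> melonic G"
| insI: "melonic G \<Longrightarrow> x \<in> leaf_slots G \<Longrightarrow> gdash G x = y \<Longrightarrow> fresh G v v' \<Longrightarrow>
    keep_old G G' v v' \<Longrightarrow> (\<forall>u\<in>gV G. gpar G' u = gpar G u) \<Longrightarrow>
    gpar G' v = x \<Longrightarrow> gpar G' v' = y \<Longrightarrow>
    dpair G' (Ch v 2) (Ch v' 2) \<Longrightarrow>
    dpair G' (Ch v 3) (Ch v' (sg sw 3)) \<Longrightarrow> dpair G' (Ch v 4) (Ch v' (sg sw 4)) \<Longrightarrow>
    (\<forall>s\<in>leaf_slots G - {x, y}. gdash G' s = gdash G s) \<Longrightarrow>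
    lead G' v v' [(2,2), (3, sg sw 3), (4, sg sw 4)] \<Longrightarrow> melonic G'"
| insII: "melonic G \<Longrightarrow> z \<in> leaf_slots G \<Longrightarrow> gdash G z = z' \<Longrightarrow> fresh G v v' \<Longrightarrow>
    keep_old G G' v v' \<Longrightarrow> (\<forall>u\<in>gV G. gpar G' u = gpar G u) \<Longrightarrow>
    gpar G' v = z \<Longrightarrow> gpar G' v' = Ch v 2 \<Longrightarrow>
    dpair G' (Ch v' 2) z' \<Longrightarrow>
    dpair G' (Ch v 3) (Ch v' (sg sw 3)) \<Longrightarrow> dpair G' (Ch v 4) (Ch v' (sg sw 4)) \<Longrightarrow>
    (\<forall>s\<in>leaf_slots G - {z, z'}. gdash G' s = gdash G s) \<Longrightarrow>
    lead G' v v' [(2,1), (3, sg sw 3), (4, sg sw 4)] \<Longrightarrow> melonic G'"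
| insIII: "melonic G \<Longrightarrow> z \<in> leaf_slots G \<Longrightarrow> gdash G z = z' \<Longrightarrow> fresh G v v' \<Longrightarrow>
    a \<in> {3,4} \<Longrightarrow> c \<in> {3,4} \<Longrightarrow>
    keep_old G G' v v' \<Longrightarrow> (\<forall>u\<in>gV G. gpar G' u = gpar G u) \<Longrightarrow>
    gpar G' v = z \<Longrightarrow> gpar G' v' = Ch v a \<Longrightarrow>
    dpair G' (Ch v 2) (Ch v' c) \<Longrightarrow> dpair G' (Ch v (7 - a)) (Ch v' 2) \<Longrightarrow>
    dpair G' (Ch v' (7 - c)) z' \<Longrightarrow>
    (\<forall>s\<in>leaf_slots G - {z, z'}. gdash G' s = gdash G s) \<Longrightarrow>
    lead G' v v' [(a,1), (2,c), (7 - a, 2)] \<Longrightarrow> melonic G'"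
| insIIs: "melonic G \<Longrightarrow> z \<in> gV G \<Longrightarrow> fresh G v v' \<Longrightarrow>
    keep_old G G' v v' \<Longrightarrow> (\<forall>u\<in>gV G - {z}. gpar G' u = gpar G u) \<Longrightarrow>
    gpar G' v = gpar G z \<Longrightarrow> gpar G' v' = Ch v 2 \<Longrightarrow> gpar G' z = Ch v' 2 \<Longrightarrow>
    dpair G' (Ch v 3) (Ch v' (sg sw 3)) \<Longrightarrow> dpair G' (Ch v 4) (Ch v' (sg sw 4)) \<Longrightarrow>
    (\<forall>s\<in>leaf_slots G. gdash G' s = gdash G s) \<Longrightarrow>
    lead G' v v' [(2,1), (3, sg sw 3), (4, sg sw 4)] \<Longrightarrow> melonic G'"
| insIIIs: "melonic G \<Longrightarrow> z \<in> gV G \<Longrightarrow> fresh G v v' \<Longrightarrow>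
    a \<in> {3,4} \<Longrightarrow> c \<in> {3,4} \<Longrightarrow>
    keep_old G G' v v' \<Longrightarrow> (\<forall>u\<in>gV G - {z}. gpar G' u = gpar G u) \<Longrightarrow>
    gpar G' v = gpar G z \<Longrightarrow> gpar G' v' = Ch v a \<Longrightarrow> gpar G' z = Ch v' c \<Longrightarrow>
    dpair G' (Ch v 2) (Ch v' (7 - c)) \<Longrightarrow> dpair G' (Ch v (7 - a)) (Ch v' 2) \<Longrightarrow>
    (\<forall>s\<in>leaf_slots G. gdash G' s = gdash G s) \<Longrightarrow>
    lead G' v v' [(a,1), (2, 7 - c), (7 - a, 2)] \<Longrightarrow> melonic G'"

end

theory Submission
  imports Defs
begin

text \<open>Write \<open>p = s ^ 4\<close> and \<open>\<epsilon> = (1 - s) / s\<close>. Give an end of a dashed edge with momentum \<open>m\<close>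
  the weight \<open>s ^ m / (1 + \<epsilon> m)\<close>, so that the edge itself weighs
  \<open>s ^ (2 m) / (1 + \<epsilon> m)\<^sup>2 \<ge> p ^ m\<close>. We show by induction along the melonic
  construction that the sum over attributions of the product of all end weights is at most
  \<open>(4 / (1 - p)) ^ n\<close> times the weight of an edge of momentum \<open>r\<close>. An insertion adds a wavy pair
  \<open>v, v'\<close>; an attribution of the new graph is determined by its restriction to the old one and by
  \<open>(S\<^sub>v, k\<^sub>v)\<close>, and the weight of the new ends, summed over these two numbers, is at most
  \<open>(4 / (1 - p))\<^sup>2\<close>. Mostly this is a product of two geometric series; for an insertion into a
  dashed edge the momentum \<open>S\<^sub>v\<close> is free, and it is the factor \<open>1 / (1 + \<epsilon> m)\<^sup>2\<close> that makes
  \<open>\<Sum>\<^sub>k w(k) w(S - k) \<le> 4 / (1 - s) w(S)\<close> hold for the edge weight \<open>w\<close>. Finally \<open>(1 - p) ^ n (4 / (1 - p)) ^ n = 4 ^ n\<close>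
  and \<open>w(r) \<le> s ^ (2 r) = p ^ (r / 2)\<close>.\<close>

section \<open>Weights of dashed edges\<close>

definition weight_denom :: "real \<Rightarrow> nat \<Rightarrow> real" where
  "weight_denom s m = 1 + (1 - s) / s * real m"

definition damping :: "real \<Rightarrow> nat \<Rightarrow> real" where
  "damping s m = 1 / (weight_denom s m)\<^sup>2"

definition end_weight :: "real \<Rightarrow> nat \<Rightarrow> real" where
  "end_weight s m = s ^ m / weight_denom s m"

definition edge_weight :: "real \<Rightarrow> nat \<Rightarrow> real" where
  "edge_weight s m = (s\<^sup>2) ^ m * damping s m"

definition vertex_factor :: "real \<Rightarrow> real" where
  "vertex_factor s = 4 / (1 - s ^ 4)"

lemma sum_geometric_le:
  fixes q :: real
  assumes "0 \<le> q" "q < 1" "finite A"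
  shows "(\<Sum>a\<in>A. q ^ a) \<le> 1 / (1 - q)"
proof -
  have "summable (\<lambda>a. q ^ a)" using assms by simp
  then have "(\<Sum>a\<in>A. q ^ a) \<le> (\<Sum>a. q ^ a)"
    using assms by (intro sum_le_suminf) auto
  also have "\<dots> = 1 / (1 - q)" using assms by (simp add: suminf_geometric)
  finally show ?thesis .
qed

lemma sum_geometric_pairs_le:
  fixes q :: real
  assumes "0 \<le> q" "q < 1" "finite Y"
  shows "(\<Sum>y\<in>Y. q ^ fst y * q ^ snd y) \<le> 1 / (1 - q)\<^sup>2"
proof -
  have "(\<Sum>y\<in>Y. q ^ fst y * q ^ snd y) \<le> (\<Sum>y\<in>fst ` Y \<times> snd ` Y. q ^ fst y * q ^ snd y)"
    using assms by (intro sum_mono2) (auto simp: subset_fst_snd)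
  also have "\<dots> = (\<Sum>a\<in>fst ` Y. q ^ a) * (\<Sum>b\<in>snd ` Y. q ^ b)"
    by (simp add: sum_product sum.cartesian_product case_prod_unfold)
  also have "\<dots> \<le> 1 / (1 - q) * (1 / (1 - q))"
    using assms by (intro mult_mono sum_geometric_le) (auto intro: sum_nonneg)
  finally show ?thesis by (simp add: power2_eq_square)
qed

lemma end_weight_sq: "end_weight s m * end_weight s m = edge_weight s m"
  by (simp add: end_weight_def edge_weight_def damping_def power2_eq_square power_mult_distrib)

context
  fixes s :: real
  assumes s_pos: "0 < s" and s_less_1: "s < 1"
begin

lemma weight_denom_ge_1: "1 \<le> weight_denom s m"
  using s_pos s_less_1 by (simp add: weight_denom_def)

lemma weight_denom_diff: "k \<le> m \<Longrightarrow> weight_denom s m = weight_denom s k + weight_denom s (m - k) - 1"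
  by (simp add: weight_denom_def of_nat_diff right_diff_distrib)

lemma damping_pos: "0 < damping s m"
  using weight_denom_ge_1[of m] by (simp add: damping_def)

lemma weight_denom_mono: "m \<le> n \<Longrightarrow> weight_denom s m \<le> weight_denom s n"
  unfolding weight_denom_def using s_pos s_less_1 by (intro add_left_mono mult_left_mono) auto

lemma damping_le_1: "damping s m \<le> 1"
  using weight_denom_ge_1[of m] by (simp add: damping_def one_le_power)

lemma damping_antimono:
  assumes "m \<le> n"
  shows "damping s n \<le> damping s m"
  unfolding damping_def
proof (rule divide_left_mono)
  show "(weight_denom s m)\<^sup>2 \<le> (weight_denom s n)\<^sup>2"
    using weight_denom_mono[OF assms] weight_denom_ge_1[of m] by (intro power_mono) auto
  show "0 < (weight_denom s n)\<^sup>2 * (weight_denom s m)\<^sup>2"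
    using weight_denom_ge_1[of m] weight_denom_ge_1[of n] by simp
qed simp

lemma sum_damping_le: "(\<Sum>k\<le>m. damping s k) \<le> 1 / (1 - s)"
proof -
  define e where "e = (1 - s) / s"
  have e_pos: "0 < e" using s_pos s_less_1 by (simp add: e_def)
  have telescope: "(\<Sum>k\<le>m. damping s k) \<le> 1 + 1 / e - 1 / (e * weight_denom s m)" for m
  proof (induction m)
    case 0 then show ?case by (simp add: damping_def weight_denom_def)
  next
    case (Suc m)
    define a where "a = weight_denom s m"
    have a: "1 \<le> a" "weight_denom s (Suc m) = a + e"
      using weight_denom_ge_1 by (auto simp: a_def e_def weight_denom_def distrib_left)
    have "damping s (Suc m) \<le> 1 / (a * (a + e))"
      using a e_pos by (auto simp: damping_def power2_eq_square intro!: divide_left_mono mult_right_mono)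
    also have "\<dots> = 1 / (e * a) - 1 / (e * (a + e))"
    proof -
      have "a \<noteq> 0" "e \<noteq> 0" "a + e \<noteq> 0" using a e_pos by auto
      then show ?thesis by (simp add: divide_simps)
    qed
    finally show ?case using Suc.IH a by (simp add: a_def)
  qed
  have "1 + 1 / e = 1 / (1 - s)" using s_pos s_less_1 by (simp add: e_def field_simps)
  moreover have "0 \<le> 1 / (e * weight_denom s m)" using e_pos weight_denom_ge_1[of m] by simp
  ultimately show ?thesis using telescope[of m] by linarith
qed

lemma damping_mult_le:
  assumes "k \<le> m"
  shows "damping s k * damping s (m - k) \<le> 2 * (damping s k + damping s (m - k)) * damping s m"
proof -
  define a b c where "a = weight_denom s k" and "b = weight_denom s (m - k)" and "c = weight_denom s m"
  have pos: "1 \<le> a" "1 \<le> b" "1 \<le> c" using weight_denom_ge_1 by (auto simp: a_def b_def c_def)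
  have "c \<le> a + b" using weight_denom_diff[OF assms] by (simp add: a_def b_def c_def)
  then have "c\<^sup>2 \<le> (a + b)\<^sup>2" using pos by (intro power_mono) auto
  also have "\<dots> \<le> 2 * (a\<^sup>2 + b\<^sup>2)" using sum_squares_ge_zero[of "a - b" 0]
    by (simp add: power2_eq_square algebra_simps)
  finally have "c\<^sup>2 \<le> 2 * (a\<^sup>2 + b\<^sup>2)" .
  then have "1 / a\<^sup>2 * (1 / b\<^sup>2) \<le> 2 * (1 / a\<^sup>2 + 1 / b\<^sup>2) * (1 / c\<^sup>2)"
    using pos by (simp add: field_simps)
  then show ?thesis by (simp add: damping_def a_def b_def c_def)
qed

lemma sum_damping_convolution_le:
  "(\<Sum>k\<le>m. damping s k * damping s (m - k)) \<le> 4 / (1 - s) * damping s m"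
proof -
  have "(\<Sum>k\<le>m. damping s k * damping s (m - k))
      \<le> (\<Sum>k\<le>m. 2 * (damping s k + damping s (m - k)) * damping s m)"
    by (intro sum_mono damping_mult_le) simp
  also have "\<dots> = 2 * damping s m * (\<Sum>k\<le>m. damping s k + damping s (m - k))"
    unfolding sum_distrib_left by (intro sum.cong) (simp_all add: algebra_simps)
  also have "\<dots> = 2 * damping s m * ((\<Sum>k\<le>m. damping s k) + (\<Sum>k\<le>m. damping s (m - k)))"
    by (simp add: sum.distrib)
  also have "(\<Sum>k\<le>m. damping s (m - k)) = (\<Sum>k\<le>m. damping s k)"
    by (rule sum.reindex_bij_witness[of _ "\<lambda>k. m - k" "\<lambda>k. m - k"]) auto
  also have "2 * damping s m * ((\<Sum>k\<le>m. damping s k) + (\<Sum>k\<le>m. damping s k))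
      \<le> 2 * damping s m * (1 / (1 - s) + 1 / (1 - s))"
    using sum_damping_le damping_pos[of m] by (intro mult_left_mono add_mono) auto
  finally show ?thesis by (simp add: mult.commute)
qed

lemma end_weight_pos: "0 < end_weight s m"
  using s_pos weight_denom_ge_1[of m] by (simp add: end_weight_def)

lemma end_weight_le_1: "end_weight s m \<le> 1"
proof -
  have "s ^ m \<le> weight_denom s m"
    using s_pos s_less_1 weight_denom_ge_1[of m] by (meson order_trans power_le_one less_imp_le)
  then show ?thesis using weight_denom_ge_1[of m] by (simp add: end_weight_def)
qed

lemma edge_weight_pos: "0 < edge_weight s m"
  using s_pos damping_pos by (simp add: edge_weight_def)

lemma edge_weight_nonneg: "0 \<le> edge_weight s m"
  using edge_weight_pos by (rule less_imp_le)

lemma edge_weight_le: "edge_weight s m \<le> (s\<^sup>2) ^ m"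
  unfolding edge_weight_def using damping_le_1[of m] s_pos by (intro mult_left_le) auto

lemma edge_weight_ge: "(s ^ 4) ^ m \<le> edge_weight s m"
proof -
  have "1 + real m * ((1 - s) / s) \<le> (1 + (1 - s) / s) ^ m"
    using s_pos s_less_1 by (intro Bernoulli_inequality) (simp add: order_trans[of _ 0])
  also have "1 + (1 - s) / s = 1 / s" using s_pos by (simp add: field_simps)
  finally have "weight_denom s m * s ^ m \<le> 1"
    using s_pos by (simp add: weight_denom_def power_divide field_simps mult.commute)
  then have "(weight_denom s m * s ^ m)\<^sup>2 \<le> 1"
    using s_pos weight_denom_ge_1[of m] by (intro power_le_one) auto
  then have "(s ^ m)\<^sup>2 \<le> damping s m"
    using weight_denom_ge_1[of m] by (simp add: damping_def le_divide_eq power_mult_distrib mult.commute)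
  then have "(s ^ m)\<^sup>2 * (s\<^sup>2) ^ m \<le> damping s m * (s\<^sup>2) ^ m"
    by (intro mult_right_mono) auto
  moreover have "(s ^ 4) ^ m = (s ^ m)\<^sup>2 * (s\<^sup>2) ^ m"
    by (simp flip: power_mult power_add add: mult.commute)
  ultimately show ?thesis by (simp add: edge_weight_def mult.commute)
qed

lemma edge_weight_le_powr: "edge_weight s m \<le> (s ^ 4) powr (real m / 2)"
proof -
  have "(s ^ 4) powr (real m / 2) = (s powr 4) powr (real m / 2)"
    using s_pos by (simp add: powr_numeral)
  also have "\<dots> = s powr real (2 * m)"
    by (simp add: powr_powr)
  also have "\<dots> = (s\<^sup>2) ^ m"
    by (subst powr_realpow[OF s_pos]) (simp add: power_mult)
  finally show ?thesis using edge_weight_le by simp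
qed

lemma sum_edge_weight_convolution_le:
  "(\<Sum>k\<le>m. edge_weight s k * edge_weight s (m - k)) \<le> 4 / (1 - s) * edge_weight s m"
proof -
  have "(\<Sum>k\<le>m. edge_weight s k * edge_weight s (m - k))
      = (s\<^sup>2) ^ m * (\<Sum>k\<le>m. damping s k * damping s (m - k))"
    by (simp add: sum_distrib_left edge_weight_def mult_ac flip: power_add)
  also have "\<dots> \<le> (s\<^sup>2) ^ m * (4 / (1 - s) * damping s m)"
    using s_pos by (intro mult_left_mono sum_damping_convolution_le) simp
  finally show ?thesis by (simp add: edge_weight_def mult_ac)
qed

lemma vertex_factor_nonneg: "0 \<le> vertex_factor s"
  using s_pos s_less_1 by (simp add: vertex_factor_def power_le_one)

lemma vertex_factor_power_mult: "(1 - s ^ 4) ^ n * (vertex_factor s ^ n * x) = 4 ^ n * x"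
proof -
  have "s ^ 4 < 1" using s_pos s_less_1 by (simp add: power_less_one_iff)
  then have "1 - s ^ 4 \<noteq> 0" by simp
  then have "(1 - s ^ 4) * vertex_factor s = 4"
    unfolding vertex_factor_def times_divide_eq_right by (rule nonzero_mult_div_cancel_left)
  then show ?thesis by (metis mult.assoc power_mult_distrib)
qed

lemma inverse_one_minus_sq_le: "1 / (1 - s\<^sup>2)\<^sup>2 \<le> (vertex_factor s)\<^sup>2"
proof -
  have pos: "0 < 1 - s\<^sup>2" "0 < 1 - s ^ 4" using s_pos s_less_1 by (auto simp: power_less_one_iff)
  have "1 - s ^ 4 = (1 - s\<^sup>2) * (1 + s\<^sup>2)" by (simp add: algebra_simps power2_eq_square power4_eq_xxxx)
  also have "\<dots> \<le> (1 - s\<^sup>2) * 4" using pos s_pos s_less_1 by (intro mult_left_mono) (auto simp: power_le_one)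
  finally have "(1 - s ^ 4)\<^sup>2 \<le> ((1 - s\<^sup>2) * 4)\<^sup>2"
    using pos by (intro power_mono) auto
  also have "\<dots> = 16 * (1 - s\<^sup>2)\<^sup>2"
    by (simp add: power2_eq_square algebra_simps)
  finally have "(1 - s ^ 4)\<^sup>2 \<le> 16 * (1 - s\<^sup>2)\<^sup>2" .
  then have "16 / (16 * (1 - s\<^sup>2)\<^sup>2) \<le> 16 / (1 - s ^ 4)\<^sup>2"
    using pos by (intro divide_left_mono) auto
  then show ?thesis by (simp add: vertex_factor_def power_divide)
qed

lemma sum_le_vertex_factor_sq_by_pairs:
  fixes F :: "'a set" and f :: "'a \<Rightarrow> real" and g :: "'a \<Rightarrow> nat \<times> nat"
  assumes "finite F" and "inj_on g {x\<in>F. P x}"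
    and "\<And>x. x \<in> F \<Longrightarrow> P x \<Longrightarrow> f x \<le> (s\<^sup>2) ^ fst (g x) * (s\<^sup>2) ^ snd (g x)"
    and "\<And>x. x \<in> F \<Longrightarrow> \<not> P x \<Longrightarrow> f x = 0"
  shows "sum f F \<le> (vertex_factor s)\<^sup>2"
proof -
  have "sum f F = sum f {x\<in>F. P x}"
    using assms by (intro sum.mono_neutral_right) auto
  also have "\<dots> \<le> (\<Sum>x\<in>{x\<in>F. P x}. (s\<^sup>2) ^ fst (g x) * (s\<^sup>2) ^ snd (g x))"
    using assms by (intro sum_mono) auto
  also have "\<dots> = (\<Sum>y\<in>g ` {x\<in>F. P x}. (s\<^sup>2) ^ fst y * (s\<^sup>2) ^ snd y)"
    using assms by (simp add: sum.reindex)
  also have "\<dots> \<le> 1 / (1 - s\<^sup>2)\<^sup>2"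
    using assms s_pos s_less_1 by (intro sum_geometric_pairs_le) (auto simp: power_less_one_iff)
  also have "\<dots> \<le> (vertex_factor s)\<^sup>2" by (rule inverse_one_minus_sq_le)
  finally show ?thesis .
qed

lemma sum_edge_weight_split_le:
  assumes "finite F"
  shows "(\<Sum>(m, k)\<in>F. if k \<le> m then edge_weight s k * edge_weight s (m - k) else 0)
    \<le> (vertex_factor s)\<^sup>2"
  by (rule sum_le_vertex_factor_sq_by_pairs[where g = "\<lambda>(m, k). (k, m - k)" and P = "\<lambda>(m, k). k \<le> m"])
     (use assms edge_weight_le edge_weight_nonneg in \<open>auto simp: inj_on_def intro!: mult_mono\<close>)

lemma sum_edge_weight_shifted_le:
  assumes "finite F"
  shows "(\<Sum>(m, k)\<in>F. if j \<le> m \<and> k \<le> m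
      then edge_weight s (m - j) * edge_weight s (if b then k else m - k) else 0)
    \<le> (vertex_factor s)\<^sup>2"
  by (rule sum_le_vertex_factor_sq_by_pairs[where g = "\<lambda>(m, k). (m - j, if b then k else m - k)"
        and P = "\<lambda>(m, k). j \<le> m \<and> k \<le> m"])
     (use assms edge_weight_le edge_weight_nonneg in
       \<open>auto simp: inj_on_def intro!: mult_mono split: if_splits\<close>)

lemma edge_weight_ratio_le:
  assumes "j \<le> m"
  shows "edge_weight s (m - j) / edge_weight s j * edge_weight s m \<le> (s ^ 4) ^ (m - j)"
proof -
  have "edge_weight s m / edge_weight s j = (s\<^sup>2) ^ (m - j) * (damping s m / damping s j)"
    using assms s_pos damping_pos[of j] by (simp add: edge_weight_def power_diff field_simps)
  also have "\<dots> \<le> (s\<^sup>2) ^ (m - j)"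
  proof -
    have "damping s m / damping s j \<le> 1" using damping_antimono[OF assms] damping_pos[of j] by simp
    then show ?thesis using s_pos by (intro mult_left_le) auto
  qed
  finally have "edge_weight s m / edge_weight s j \<le> (s\<^sup>2) ^ (m - j)" .
  then have "edge_weight s (m - j) * (edge_weight s m / edge_weight s j)
      \<le> (s\<^sup>2) ^ (m - j) * (s\<^sup>2) ^ (m - j)"
    using edge_weight_le edge_weight_pos by (intro mult_mono) (auto intro: less_imp_le)
  also have "\<dots> = (s ^ 4) ^ (m - j)"
    by (simp flip: power_mult_distrib add: power4_eq_xxxx power2_eq_square mult.assoc)
  finally show ?thesis by simp
qed

lemma sum_edge_weight_melon_row_le:
  assumes "finite K"
  shows "(\<Sum>k\<in>K. if j \<le> m \<and> k \<le> m
      then edge_weight s (m - j) * edge_weight s k * edge_weight s (m - k) / edge_weight s j else 0)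
    \<le> (if j \<le> m then 4 / (1 - s) * (s ^ 4) ^ (m - j) else 0)"
proof (cases "j \<le> m")
  case True
  define c where "c = edge_weight s (m - j) / edge_weight s j"
  have c_nonneg: "0 \<le> c" using edge_weight_pos by (simp add: c_def less_imp_le)
  have "(\<Sum>k\<in>K. if j \<le> m \<and> k \<le> m
      then edge_weight s (m - j) * edge_weight s k * edge_weight s (m - k) / edge_weight s j else 0)
      = (\<Sum>k\<in>K. if k \<in> {..m} then c * (edge_weight s k * edge_weight s (m - k)) else 0)"
    using True by (intro sum.cong) (auto simp: c_def)
  also have "\<dots> = c * (\<Sum>k\<in>K \<inter> {..m}. edge_weight s k * edge_weight s (m - k))"
    by (simp add: sum.inter_restrict[OF assms] sum_distrib_left) (intro sum.cong; simp)
  also have "\<dots> \<le> c * (\<Sum>k\<le>m. edge_weight s k * edge_weight s (m - k))"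
    using c_nonneg edge_weight_nonneg by (intro mult_left_mono sum_mono2) auto
  also have "\<dots> \<le> c * (4 / (1 - s) * edge_weight s m)"
    using c_nonneg by (intro mult_left_mono sum_edge_weight_convolution_le)
  also have "\<dots> = 4 / (1 - s) * (c * edge_weight s m)"
    by (simp add: mult_ac)
  also have "\<dots> \<le> 4 / (1 - s) * (s ^ 4) ^ (m - j)"
    using True s_less_1 unfolding c_def by (intro mult_left_mono edge_weight_ratio_le) auto
  finally show ?thesis using True by simp
qed simp

lemma sum_edge_weight_melon_le:
  assumes "finite F"
  shows "(\<Sum>(m, k)\<in>F. if j \<le> m \<and> k \<le> m
      then edge_weight s (m - j) * edge_weight s k * edge_weight s (m - k) / edge_weight s j else 0)
    \<le> (vertex_factor s)\<^sup>2"
proof -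
  let ?f = "\<lambda>m k. if j \<le> m \<and> k \<le> m
      then edge_weight s (m - j) * edge_weight s k * edge_weight s (m - k) / edge_weight s j else 0"
  let ?M = "{m \<in> fst ` F. j \<le> m}"
  have pos1: "0 < 1 - s" and pos4: "0 < 1 - s ^ 4"
    using s_pos s_less_1 by (auto simp: power_less_one_iff)
  have "(\<Sum>(m, k)\<in>F. ?f m k) \<le> (\<Sum>(m, k)\<in>fst ` F \<times> snd ` F. ?f m k)"
    using assms edge_weight_pos
    by (intro sum_mono2) (auto simp: subset_fst_snd less_imp_le)
  also have "\<dots> = (\<Sum>m\<in>fst ` F. \<Sum>k\<in>snd ` F. ?f m k)"
    by (simp add: sum.cartesian_product)
  also have "\<dots> \<le> (\<Sum>m\<in>fst ` F. if j \<le> m then 4 / (1 - s) * (s ^ 4) ^ (m - j) else 0)"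
    using assms by (intro sum_mono sum_edge_weight_melon_row_le) auto
  also have "\<dots> = 4 / (1 - s) * (\<Sum>m\<in>?M. (s ^ 4) ^ (m - j))"
    using assms by (simp add: sum.inter_filter[symmetric] sum_distrib_left)
  also have "\<dots> = 4 / (1 - s) * (\<Sum>i\<in>(\<lambda>m. m - j) ` ?M. (s ^ 4) ^ i)"
    by (subst sum.reindex) (auto simp: inj_on_def)
  also have "\<dots> \<le> 4 / (1 - s) * (1 / (1 - s ^ 4))"
    using assms s_pos s_less_1 pos1
    by (intro mult_left_mono sum_geometric_le) (auto simp: power_less_one_iff)
  also have "4 / (1 - s) * (1 / (1 - s ^ 4)) \<le> (vertex_factor s)\<^sup>2"
  proof -
    have "1 - s ^ 4 = (1 - s) * (1 + s + s\<^sup>2 + s ^ 3)"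
      by (simp add: algebra_simps power2_eq_square power3_eq_cube power4_eq_xxxx)
    also have "\<dots> \<le> (1 - s) * 4"
    proof -
      have "s\<^sup>2 \<le> 1" "s ^ 3 \<le> 1" using s_pos s_less_1 by (simp_all add: power_le_one)
      then show ?thesis using pos1 s_less_1 by (intro mult_left_mono) auto
    qed
    finally show ?thesis
      using pos1 pos4 by (simp add: vertex_factor_def divide_simps power2_eq_square)
  qed
  finally show ?thesis .
qed

end

section \<open>Attributions of an insertion\<close>

lemma infsum_le_by_injection:
  fixes h :: "'a \<Rightarrow> 'b \<times> 'c" and w' :: "'a \<Rightarrow> real" and w :: "'b \<Rightarrow> real"
    and \<rho> :: "'b \<Rightarrow> 'c \<Rightarrow> real"
  assumes inj: "inj_on h A'" and maps_to: "\<And>x. x \<in> A' \<Longrightarrow> fst (h x) \<in> A"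
    and le: "\<And>x. x \<in> A' \<Longrightarrow> w' x \<le> w (fst (h x)) * \<rho> (fst (h x)) (snd (h x))"
    and w_nonneg: "\<And>y. 0 \<le> w y" and \<rho>_nonneg: "\<And>y z. 0 \<le> \<rho> y z"
    and \<rho>_sum: "\<And>y Z. finite Z \<Longrightarrow> sum (\<rho> y) Z \<le> c"
  shows "(\<Sum>\<^sub>\<infinity>x\<in>A'. ennreal (w' x)) \<le> ennreal c * (\<Sum>\<^sub>\<infinity>y\<in>A. ennreal (w y))"
proof (rule infsum_le_finite_sums)
  show "(\<lambda>x. ennreal (w' x)) summable_on A'" by (rule nonneg_summable_on_complete) simp
  fix F assume F: "finite F" "F \<subseteq> A'"
  let ?g = "\<lambda>p. w (fst p) * \<rho> (fst p) (snd p)"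
  let ?B = "fst ` h ` F" and ?C = "snd ` h ` F"
  have g_nonneg: "0 \<le> ?g p" for p using w_nonneg \<rho>_nonneg by simp
  have c_nonneg: "0 \<le> c" using \<rho>_sum[of "{}"] by simp
  have "(\<Sum>x\<in>F. ?g (h x)) = (\<Sum>p\<in>h ` F. ?g p)"
    using F inj by (simp add: sum.reindex inj_on_subset)
  also have "\<dots> \<le> (\<Sum>p\<in>?B \<times> ?C. ?g p)"
    using F g_nonneg by (intro sum_mono2) (auto simp: subset_fst_snd)
  also have "\<dots> = (\<Sum>y\<in>?B. w y * sum (\<rho> y) ?C)"
    by (simp add: sum.cartesian_product sum_distrib_left case_prod_unfold)
  also have "\<dots> \<le> (\<Sum>y\<in>?B. w y * c)"
    using F w_nonneg \<rho>_sum by (intro sum_mono mult_left_mono) auto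
  finally have real_le: "(\<Sum>x\<in>F. ?g (h x)) \<le> c * (\<Sum>y\<in>?B. w y)"
    by (simp add: sum_distrib_left mult.commute)
  have "(\<Sum>x\<in>F. ennreal (w' x)) \<le> (\<Sum>x\<in>F. ennreal (?g (h x)))"
    using F le by (intro sum_mono ennreal_leI) auto
  also have "\<dots> = ennreal (\<Sum>x\<in>F. ?g (h x))"
    using g_nonneg by (rule sum_ennreal)
  also have "\<dots> \<le> ennreal (c * (\<Sum>y\<in>?B. w y))"
    using real_le by (rule ennreal_leI)
  also have "\<dots> = ennreal c * (\<Sum>y\<in>?B. ennreal (w y))"
    using c_nonneg w_nonneg by (simp add: ennreal_mult sum_nonneg sum_ennreal)
  also have "(\<Sum>y\<in>?B. ennreal (w y)) \<le> (\<Sum>\<^sub>\<infinity>y\<in>A. ennreal (w y))"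
  proof -
    have "(\<Sum>y\<in>?B. ennreal (w y)) = (\<Sum>\<^sub>\<infinity>y\<in>?B. ennreal (w y))"
      using F by simp
    also have "\<dots> \<le> (\<Sum>\<^sub>\<infinity>y\<in>A. ennreal (w y))"
      using F maps_to by (intro infsum_mono_neutral) (auto intro: nonneg_summable_on_complete)
    finally show ?thesis .
  qed
  finally show "(\<Sum>x\<in>F. ennreal (w' x)) \<le> ennreal c * (\<Sum>\<^sub>\<infinity>y\<in>A. ennreal (w y))"
    by (simp add: mult_left_mono)
qed

type_synonym attribution = "nat \<Rightarrow> nat \<times> nat \<times> nat"

definition restrict_attr :: "graph \<Rightarrow> attribution \<Rightarrow> attribution" where
  "restrict_attr G mo = (\<lambda>u. if u \<in> gV G then mo u else (0, 0, 0))"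

text \<open>The dashed-edge condition is imposed at every leaf slot, not only at the leaves of type
  \<open>\<alpha>\<close>, since the melonic construction does not keep track of edge types. For graphs in the
  sense of \<^const>\<open>is_graph\<close> nothing changes (\<open>admissible_subset_sym_admissible\<close>).\<close>
definition sym_admissible :: "nat \<Rightarrow> graph \<Rightarrow> attribution set" where
  "sym_admissible r G =
     {mo \<in> admissible r G. \<forall>x\<in>leaf_slots G. smom r mo x = smom r mo (gdash G x)}"

definition leaf_weight :: "real \<Rightarrow> nat \<Rightarrow> graph \<Rightarrow> attribution \<Rightarrow> real" where
  "leaf_weight s r G mo = (\<Prod>x\<in>leaf_slots G. end_weight s (smom r mo x))"

definition weight_bound :: "real \<Rightarrow> graph \<Rightarrow> bool" where
  "weight_bound s G \<longleftrightarrow> (\<forall>r. (\<Sum>\<^sub>\<infinity>mo\<in>sym_admissible r G. ennreal (leaf_weight s r G mo))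
     \<le> ennreal (vertex_factor s ^ card (gV G) * edge_weight s r))"

definition pairing_on :: "'a set \<Rightarrow> ('a \<Rightarrow> 'a) \<Rightarrow> bool" where
  "pairing_on A f \<longleftrightarrow> (\<forall>x\<in>A. f x \<in> A \<and> f x \<noteq> x \<and> f (f x) = x)"

definition wf_graph :: "graph \<Rightarrow> bool" where
  "wf_graph G \<longleftrightarrow> finite (gV G) \<and> (\<forall>u\<in>gV G. gpar G u \<in> slots G) \<and>
     pairing_on (leaf_slots G) (gdash G) \<and> (\<forall>u\<in>gV G. gmate G u \<in> gV G)"

definition new_slots :: "nat \<Rightarrow> nat \<Rightarrow> slot set" where
  "new_slots v v' = {Ch v 2, Ch v 3, Ch v 4, Ch v' 2, Ch v' 3, Ch v' 4}"

lemma pairing_on_Un_Diff: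
  assumes "pairing_on A f" and "pairing_on C g" and "\<forall>x\<in>B. f x \<in> B" and "\<forall>x\<in>A - B. g x = f x"
  shows "pairing_on ((A - B) \<union> C) g"
  using assms unfolding pairing_on_def by (metis Diff_iff Un_iff)

lemma sym_admissible_iff:
  "mo \<in> sym_admissible r G \<longleftrightarrow>
     (\<forall>u. u \<notin> gV G \<longrightarrow> mo u = (0, 0, 0)) \<and>
     (\<forall>u\<in>gV G. case mo u of (S, j, k) \<Rightarrow> j \<le> S \<and> k \<le> S) \<and>
     (\<forall>u\<in>gV G. emom mo u 1 = smom r mo (gpar G u)) \<and>
     (\<forall>x\<in>leaf_slots G. smom r mo x = smom r mo (gdash G x)) \<and>
     (\<forall>u\<in>gV G. u < gmate G u \<longrightarrow>
        fst (mo u) = fst (mo (gmate G u)) \<and> propc (gprop G u) (mo u) (mo (gmate G u)))"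
  by (auto simp: sym_admissible_def admissible_def lvs_def)

lemma sym_admissible_dashed:
  "mo \<in> sym_admissible r G \<Longrightarrow> x \<in> leaf_slots G \<Longrightarrow> gdash G x = y \<Longrightarrow> smom r mo x = smom r mo y"
  by (auto simp: sym_admissible_iff)

lemma Ch_in_slots_iff: "Ch u i \<in> slots G \<longleftrightarrow> u \<in> gV G \<and> i \<in> {2, 3, 4}"
  by (auto simp: slots_def)

lemma leaf_slots_subset: "leaf_slots G \<subseteq> slots G"
  by (auto simp: leaf_slots_def)

lemma finite_slots: "finite (gV G) \<Longrightarrow> finite (slots G)"
proof -
  have "{Ch u i | u i. u \<in> gV G \<and> i \<in> {2, 3, 4}} = (\<lambda>(u, i). Ch u i) ` (gV G \<times> {2, 3, 4})"
    by auto
  then show "finite (gV G) \<Longrightarrow> finite (slots G)" by (simp add: slots_def)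
qed

lemma finite_leaf_slots: "finite (gV G) \<Longrightarrow> finite (leaf_slots G)"
  using finite_slots leaf_slots_subset by (rule finite_subset[rotated])

lemma smom_restrict_attr: "x \<in> slots G \<Longrightarrow> smom r (restrict_attr G mo) x = smom r mo x"
  by (cases x) (auto simp: slots_def restrict_attr_def emom_def)

lemma leaf_weight_nonneg: "0 < s \<Longrightarrow> s < 1 \<Longrightarrow> 0 \<le> leaf_weight s r G mo"
  unfolding leaf_weight_def by (intro prod_nonneg) (auto intro: less_imp_le end_weight_pos)

lemma leaf_weight_split:
  assumes "finite (gV G)" and "leaf_slots G' = (leaf_slots G - R) \<union> N"
    and "R \<subseteq> leaf_slots G" and "N \<inter> slots G = {}" and "finite N"
  shows "leaf_weight s r G' mo' * (\<Prod>x\<in>R. end_weight s (smom r mo' x))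
    = leaf_weight s r G (restrict_attr G mo') * (\<Prod>x\<in>N. end_weight s (smom r mo' x))"
proof -
  let ?g = "\<lambda>x. end_weight s (smom r mo' x)"
  have fin: "finite (leaf_slots G)" using assms(1) by (rule finite_leaf_slots)
  have "leaf_weight s r G' mo' = prod ?g (leaf_slots G - R) * prod ?g N"
    unfolding leaf_weight_def assms(2) using fin assms(4,5) leaf_slots_subset
    by (subst prod.union_disjoint) auto
  moreover have "leaf_weight s r G (restrict_attr G mo') = prod ?g (leaf_slots G)"
    unfolding leaf_weight_def
    by (intro prod.cong refl) (simp add: smom_restrict_attr[OF subsetD[OF leaf_slots_subset]])
  moreover have "prod ?g (leaf_slots G) = prod ?g (leaf_slots G - R) * prod ?g R"
    by (rule prod.subset_diff[OF assms(3) fin])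
  ultimately show ?thesis by (simp add: ac_simps)
qed

locale insertion =
  fixes G G' :: graph and v v' :: nat
  assumes wf: "wf_graph G" and fresh: "fresh G v v'" and keep: "keep_old G G' v v'"
begin

lemma vertices_insert: "gV G' = insert v (insert v' (gV G))"
  using keep by (simp add: keep_old_def)

lemma new_vertices: "v \<notin> gV G" "v' \<notin> gV G" "v \<noteq> v'"
  using fresh by (auto simp: fresh_def)

lemma finite_vertices: "finite (gV G)"
  using wf by (simp add: wf_graph_def)

lemma parents_in_slots: "gpar G ` gV G \<subseteq> slots G"
  using wf by (auto simp: wf_graph_def)

lemma dashed_pairing: "pairing_on (leaf_slots G) (gdash G)"
  using wf by (simp add: wf_graph_def)

lemma slots_insert: "slots G' = slots G \<union> new_slots v v'"
  using keep by (auto simp: slots_def keep_old_def new_slots_def)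

lemma new_slots_disjoint: "new_slots v v' \<inter> slots G = {}"
  using new_vertices by (auto simp: slots_def new_slots_def)

lemma leaf_slots_insert:
  assumes "gpar G' ` gV G' = gpar G ` gV G \<union> X"
  shows "leaf_slots G' = (leaf_slots G - X) \<union> (new_slots v v' - X)"
  using assms slots_insert new_slots_disjoint parents_in_slots by (auto simp: leaf_slots_def)

lemma wf_graph_insertI:
  assumes "\<forall>u\<in>gV G'. gpar G' u \<in> slots G'" and "pairing_on (leaf_slots G') (gdash G')"
  shows "wf_graph G'"
proof -
  have "\<forall>u\<in>gV G'. gmate G' u \<in> gV G'"
    using wf keep vertices_insert by (auto simp: keep_old_def wf_graph_def)
  then show ?thesis using assms finite_vertices vertices_insert by (simp add: wf_graph_def)
qed

lemma new_vertex_attribution: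
  assumes mo': "mo' \<in> sym_admissible r G'" and v: "mo' v = (S, j, k)"
  obtains j' k' where "mo' v' = (S, j', k')" "j \<le> S" "k \<le> S" "j' \<le> S" "k' \<le> S"
    "j = smom r mo' (gpar G' v)" "j' = smom r mo' (gpar G' v')"
proof -
  obtain S' j' k' where v': "mo' v' = (S', j', k')" by (cases "mo' v'") auto
  have in_G': "v \<in> gV G'" "v' \<in> gV G'" using vertices_insert by auto
  have mates: "gmate G' v = v'" "gmate G' v' = v" using keep by (auto simp: keep_old_def)
  have wavy: "u \<in> gV G' \<Longrightarrow> u < gmate G' u \<Longrightarrow> fst (mo' u) = fst (mo' (gmate G' u))" for u
    using mo' by (simp add: sym_admissible_iff)
  have bounds: "u \<in> gV G' \<Longrightarrow> case mo' u of (S, j, k) \<Rightarrow> j \<le> S \<and> k \<le> S" for u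
    using mo' by (simp add: sym_admissible_iff)
  have parents: "u \<in> gV G' \<Longrightarrow> emom mo' u 1 = smom r mo' (gpar G' u)" for u
    using mo' by (simp add: sym_admissible_iff)
  have "S' = S"
  proof (cases "v < v'")
    case True then show ?thesis using wavy[of v] in_G' mates v v' by simp
  next
    case False then have "v' < v" using new_vertices by simp
    then show ?thesis using wavy[of v'] in_G' mates v v' by simp
  qed
  moreover have "j \<le> S" "k \<le> S" "j' \<le> S'" "k' \<le> S'"
    using bounds[OF in_G'(1)] bounds[OF in_G'(2)] v v' by simp_all
  moreover have "j = smom r mo' (gpar G' v)" "j' = smom r mo' (gpar G' v')"
    using parents[OF in_G'(1)] parents[OF in_G'(2)] v v' by (simp_all add: emom_def)
  ultimately show ?thesis using that v' by blast
qed

lemma restrict_sym_admissible: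
  assumes mo': "mo' \<in> sym_admissible r G'"
    and parents: "\<forall>u\<in>gV G. emom mo' u 1 = smom r mo' (gpar G u)"
    and dashed: "\<forall>x\<in>leaf_slots G. smom r mo' x = smom r mo' (gdash G x)"
  shows "restrict_attr G mo' \<in> sym_admissible r G"
  unfolding sym_admissible_iff
proof (intro conjI ballI allI impI)
  let ?mo = "restrict_attr G mo'"
  have old: "u \<in> gV G \<Longrightarrow> ?mo u = mo' u" for u by (simp add: restrict_attr_def)
  fix u assume u: "u \<in> gV G"
  then have u': "u \<in> gV G'" using vertices_insert by simp
  show "case ?mo u of (S, j, k) \<Rightarrow> j \<le> S \<and> k \<le> S"
    using mo' u' old[OF u] by (simp add: sym_admissible_iff)
  have "gpar G u \<in> slots G" using u parents_in_slots by blast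
  then show "emom ?mo u 1 = smom r ?mo (gpar G u)"
    using parents u old[OF u] by (simp add: emom_def smom_restrict_attr)
  assume less: "u < gmate G u"
  have mate: "gmate G' u = gmate G u" "gmate G u \<in> gV G" "gprop G' u = gprop G u"
    using keep wf u less by (auto simp: keep_old_def wf_graph_def)
  have "u < gmate G' u \<longrightarrow> fst (mo' u) = fst (mo' (gmate G' u))
      \<and> propc (gprop G' u) (mo' u) (mo' (gmate G' u))"
    using mo' u' unfolding sym_admissible_iff by blast
  then have "fst (mo' u) = fst (mo' (gmate G' u)) \<and> propc (gprop G' u) (mo' u) (mo' (gmate G' u))"
    using less mate(1) by simp
  then show "fst (?mo u) = fst (?mo (gmate G u))" and "propc (gprop G u) (?mo u) (?mo (gmate G u))"
    using old[OF u] old[OF mate(2)] mate by simp_all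
next
  fix x assume x: "x \<in> leaf_slots G"
  then have "x \<in> slots G" "gdash G x \<in> slots G"
    using dashed_pairing leaf_slots_subset unfolding pairing_on_def by blast+
  then show "smom r (restrict_attr G mo') x = smom r (restrict_attr G mo') (gdash G x)"
    using dashed x by (simp add: smom_restrict_attr)
qed (simp add: restrict_attr_def)

lemma parent_image:
  assumes "\<forall>u\<in>gV G. gpar G' u = gpar G u"
  shows "gpar G' ` gV G' = gpar G ` gV G \<union> {gpar G' v, gpar G' v'}"
proof -
  have "gpar G' ` gV G = gpar G ` gV G" using assms by (intro image_cong) auto
  then show ?thesis using vertices_insert by auto
qed

lemma parent_image_subdivided:
  assumes "z \<in> gV G" and "\<forall>u\<in>gV G - {z}. gpar G' u = gpar G u" and "gpar G' v = gpar G z"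
  shows "gpar G' ` gV G' = gpar G ` gV G \<union> {gpar G' v', gpar G' z}"
proof -
  have "gpar G' ` (gV G - {z}) = gpar G ` (gV G - {z})" using assms(2) by (intro image_cong) auto
  then show ?thesis using assms(1,3) vertices_insert by auto
qed

lemma twisted_momenta:
  assumes mo': "mo' \<in> sym_admissible r G'"
    and v: "mo' v = (S, j, k)" and v': "mo' v' = (S, j', k')" and "k \<le> S" "k' \<le> S"
    and leaves: "Ch v 3 \<in> leaf_slots G'"
    and dashed: "dpair G' (Ch v 3) (Ch v' (sg sw 3))"
  shows "k' = (if sw then S - k else k)"
proof -
  have "smom r mo' (Ch v 3) = smom r mo' (Ch v' (sg sw 3))"
    using sym_admissible_dashed[OF mo' leaves] dashed by (simp add: dpair_def)
  then show ?thesis using assms(4,5) v v' by (cases sw) (auto simp: sg_def emom_def)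
qed

text \<open>\<open>\<Phi>\<close> and \<open>\<Psi>\<close> recover the momenta at \<open>v\<close> and \<open>v'\<close> from the restriction to \<open>G\<close> and
  \<open>(S\<^sub>v, k\<^sub>v)\<close>, so these data determine the attribution of \<open>G'\<close>.\<close>
lemma sum_leaf_weight_insert_le:
  fixes \<Phi> \<Psi> :: "attribution \<Rightarrow> nat \<Rightarrow> nat \<Rightarrow> nat \<times> nat \<times> nat"
    and \<rho> :: "attribution \<Rightarrow> nat \<Rightarrow> nat \<Rightarrow> real"
  assumes s: "0 < s" "s < 1"
    and restrict: "\<And>mo'. mo' \<in> sym_admissible r G' \<Longrightarrow> restrict_attr G mo' \<in> sym_admissible r G"
    and rebuild: "\<And>mo' S j k. mo' \<in> sym_admissible r G' \<Longrightarrow> mo' v = (S, j, k) \<Longrightarrow>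
       mo' v = \<Phi> (restrict_attr G mo') S k \<and> mo' v' = \<Psi> (restrict_attr G mo') S k"
    and weight: "\<And>mo' S j k. mo' \<in> sym_admissible r G' \<Longrightarrow> mo' v = (S, j, k) \<Longrightarrow>
       leaf_weight s r G' mo' \<le> leaf_weight s r G (restrict_attr G mo') * \<rho> (restrict_attr G mo') S k"
    and \<rho>_nonneg: "\<And>mo m k. 0 \<le> \<rho> mo m k"
    and \<rho>_sum: "\<And>mo F. finite F \<Longrightarrow> (\<Sum>(m, k)\<in>F. \<rho> mo m k) \<le> (vertex_factor s)\<^sup>2"
  shows "(\<Sum>\<^sub>\<infinity>mo\<in>sym_admissible r G'. ennreal (leaf_weight s r G' mo))
    \<le> ennreal ((vertex_factor s)\<^sup>2) * (\<Sum>\<^sub>\<infinity>mo\<in>sym_admissible r G. ennreal (leaf_weight s r G mo))"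
proof -
  define key where "key mo' = (fst (mo' v), snd (snd (mo' v)))" for mo' :: attribution
  have key: "mo' v = (fst (key mo'), fst (snd (mo' v)), snd (key mo'))" for mo'
    by (simp add: key_def)
  let ?h = "\<lambda>mo'. (restrict_attr G mo', key mo')"
  show ?thesis
  proof (rule infsum_le_by_injection[where h = ?h and \<rho> = "\<lambda>mo. case_prod (\<rho> mo)"])
    show "inj_on ?h (sym_admissible r G')"
    proof (rule inj_onI, rule ext)
      fix mo1 mo2 u
      assume mo: "mo1 \<in> sym_admissible r G'" "mo2 \<in> sym_admissible r G'" and eq: "?h mo1 = ?h mo2"
      consider "u \<in> gV G" | "u = v" | "u = v'" | "u \<notin> gV G'" using vertices_insert by auto
      then show "mo1 u = mo2 u"
      proof cases
        case 1 then show ?thesis using eq by (metis Pair_inject restrict_attr_def)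
      next
        case 2 then show ?thesis using rebuild[OF mo(1) key[of mo1]] rebuild[OF mo(2) key[of mo2]]
          eq by simp
      next
        case 3 then show ?thesis using rebuild[OF mo(1) key[of mo1]] rebuild[OF mo(2) key[of mo2]]
          eq by simp
      next
        case 4 then show ?thesis using mo by (simp add: sym_admissible_iff)
      qed
    qed
  next
    fix mo' assume mo': "mo' \<in> sym_admissible r G'"
    show "fst (?h mo') \<in> sym_admissible r G" using restrict[OF mo'] by simp
    show "leaf_weight s r G' mo' \<le> leaf_weight s r G (fst (?h mo'))
        * case_prod (\<rho> (fst (?h mo'))) (snd (?h mo'))"
      using weight[OF mo' key[of mo']] by (simp add: case_prod_beta)
  qed (simp_all add: leaf_weight_nonneg[OF s] \<rho>_nonneg \<rho>_sum split: prod.splits)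
qed

lemma weight_bound_insert:
  assumes s: "0 < s" "s < 1" and bound: "weight_bound s G"
    and step: "\<And>r. (\<Sum>\<^sub>\<infinity>mo\<in>sym_admissible r G'. ennreal (leaf_weight s r G' mo))
      \<le> ennreal ((vertex_factor s)\<^sup>2) * (\<Sum>\<^sub>\<infinity>mo\<in>sym_admissible r G. ennreal (leaf_weight s r G mo))"
  shows "weight_bound s G'"
  unfolding weight_bound_def
proof
  fix r
  have "card (gV G') = card (gV G) + 2" using vertices_insert new_vertices finite_vertices by simp
  then have card: "vertex_factor s ^ card (gV G') * edge_weight s r
      = (vertex_factor s)\<^sup>2 * (vertex_factor s ^ card (gV G) * edge_weight s r)"
    by (simp only: power_add mult_ac)
  have "(\<Sum>\<^sub>\<infinity>mo\<in>sym_admissible r G'. ennreal (leaf_weight s r G' mo))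
      \<le> ennreal ((vertex_factor s)\<^sup>2) * (\<Sum>\<^sub>\<infinity>mo\<in>sym_admissible r G. ennreal (leaf_weight s r G mo))"
    by (rule step)
  also have "\<dots> \<le> ennreal ((vertex_factor s)\<^sup>2) * ennreal (vertex_factor s ^ card (gV G) * edge_weight s r)"
    using bound by (intro mult_left_mono) (auto simp: weight_bound_def)
  also have "\<dots> = ennreal (vertex_factor s ^ card (gV G') * edge_weight s r)"
    unfolding card using vertex_factor_nonneg[OF s] edge_weight_nonneg[OF s]
    by (simp add: ennreal_mult[symmetric])
  finally show "(\<Sum>\<^sub>\<infinity>mo\<in>sym_admissible r G'. ennreal (leaf_weight s r G' mo))
      \<le> ennreal (vertex_factor s ^ card (gV G') * edge_weight s r)" .
qed

end

section \<open>The five melonic insertions\<close>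

text \<open>Each locale assumes the hypotheses of the corresponding rule of \<^const>\<open>melonic\<close> except the
  leading-propagator condition, which the estimate does not need.\<close>

locale melon_I = insertion +
  fixes x y :: slot and sw :: bool
  assumes x_leaf: "x \<in> leaf_slots G" and dash_x: "gdash G x = y"
    and par_old: "\<forall>u\<in>gV G. gpar G' u = gpar G u"
    and par_v: "gpar G' v = x" and par_v': "gpar G' v' = y"
    and dash_2: "dpair G' (Ch v 2) (Ch v' 2)"
    and dash_3: "dpair G' (Ch v 3) (Ch v' (sg sw 3))" and dash_4: "dpair G' (Ch v 4) (Ch v' (sg sw 4))"
    and dash_old: "\<forall>t\<in>leaf_slots G - {x, y}. gdash G' t = gdash G t"
begin

lemma y_leaf: "y \<in> leaf_slots G" "x \<noteq> y" "gdash G y = x"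
  using dashed_pairing x_leaf dash_x by (auto simp: pairing_on_def)

lemma leaf_slots_I: "leaf_slots G' = (leaf_slots G - {x, y}) \<union> new_slots v v'"
proof -
  have "{x, y} \<subseteq> slots G" using x_leaf y_leaf leaf_slots_subset by blast
  then have "new_slots v v' - {x, y} = new_slots v v'" using new_slots_disjoint by blast
  then show ?thesis using leaf_slots_insert[OF parent_image[OF par_old]] par_v par_v' by simp
qed

lemma wf_graph_I: "wf_graph G'"
proof (rule wf_graph_insertI)
  show "\<forall>u\<in>gV G'. gpar G' u \<in> slots G'"
    using vertices_insert par_old par_v par_v' parents_in_slots slots_insert
      subsetD[OF leaf_slots_subset x_leaf] subsetD[OF leaf_slots_subset y_leaf(1)] by auto
  have "pairing_on (new_slots v v') (gdash G')"
    using dash_2 dash_3 dash_4 new_vertices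
    by (cases sw) (auto simp: pairing_on_def new_slots_def dpair_def sg_def)
  then show "pairing_on (leaf_slots G') (gdash G')"
    unfolding leaf_slots_I using dashed_pairing dash_x y_leaf dash_old by (intro pairing_on_Un_Diff) auto
qed

lemma attribution_I:
  assumes mo': "mo' \<in> sym_admissible r G'" and v: "mo' v = (S, j, k)"
  shows "mo' v' = (S, j, if sw then S - k else k)" "j \<le> S" "k \<le> S"
    and "smom r mo' x = j" "smom r mo' y = j"
proof -
  obtain j' k' where v': "mo' v' = (S, j', k')"
    and bounds: "j \<le> S" "k \<le> S" "j' \<le> S" "k' \<le> S"
    and par: "j = smom r mo' (gpar G' v)" "j' = smom r mo' (gpar G' v')"
    using new_vertex_attribution[OF mo' v] by blast
  have leaves: "Ch v 2 \<in> leaf_slots G'" "Ch v 3 \<in> leaf_slots G'"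
    using leaf_slots_I by (auto simp: new_slots_def)
  have "smom r mo' (Ch v 2) = smom r mo' (Ch v' 2)"
    using sym_admissible_dashed[OF mo' leaves(1)] dash_2 by (simp add: dpair_def)
  then have "j' = j" using v v' bounds by (simp add: emom_def)
  moreover have "k' = (if sw then S - k else k)"
    using twisted_momenta[OF mo' v v' bounds(2,4) leaves(2) dash_3] .
  ultimately show "mo' v' = (S, j, if sw then S - k else k)" "j \<le> S" "k \<le> S"
    and "smom r mo' x = j" "smom r mo' y = j"
    using v' bounds par par_v par_v' by simp_all
qed

lemma restrict_I:
  assumes mo': "mo' \<in> sym_admissible r G'"
  shows "restrict_attr G mo' \<in> sym_admissible r G"
proof (rule restrict_sym_admissible[OF mo'])
  show "\<forall>u\<in>gV G. emom mo' u 1 = smom r mo' (gpar G u)"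
    using mo' par_old vertices_insert by (simp add: sym_admissible_iff)
  have xy: "smom r mo' x = smom r mo' y"
    using attribution_I(4,5)[OF mo'] by (metis prod_cases3)
  have other: "smom r mo' t = smom r mo' (gdash G t)" if "t \<in> leaf_slots G - {x, y}" for t
    using that sym_admissible_dashed[OF mo'] leaf_slots_I dash_old by auto
  show "\<forall>t\<in>leaf_slots G. smom r mo' t = smom r mo' (gdash G t)"
  proof
    fix t assume "t \<in> leaf_slots G"
    then consider "t = x" | "t = y" | "t \<in> leaf_slots G - {x, y}" by blast
    then show "smom r mo' t = smom r mo' (gdash G t)"
      by cases (use xy other dash_x y_leaf in auto)
  qed
qed

lemma leaf_weight_I:
  assumes s: "0 < s" "s < 1" and mo': "mo' \<in> sym_admissible r G'" and v: "mo' v = (S, j, k)"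
  shows "leaf_weight s r G' mo' = leaf_weight s r G (restrict_attr G mo')
    * (edge_weight s (S - j) * edge_weight s k * edge_weight s (S - k) / edge_weight s j)"
proof -
  let ?e = "end_weight s" let ?w = "\<lambda>t. ?e (smom r mo' t)"
  have xy: "prod ?w {x, y} = ?e j * ?e j"
    and new: "prod ?w (new_slots v v') = (?e (S - j) * ?e (S - j))
        * (?e k * ?e k) * (?e (S - k) * ?e (S - k))"
    using attribution_I[OF mo' v] v new_vertices y_leaf(2) by (auto simp: new_slots_def emom_def mult_ac)
  have "leaf_weight s r G' mo' * prod ?w {x, y}
      = leaf_weight s r G (restrict_attr G mo') * prod ?w (new_slots v v')"
    using x_leaf y_leaf new_slots_disjoint finite_vertices leaf_slots_I
    by (intro leaf_weight_split) (auto simp: new_slots_def)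
  then show ?thesis
    using edge_weight_pos[OF s, of j] unfolding xy new end_weight_sq by (simp add: field_simps)
qed

lemma weight_bound_I:
  assumes s: "0 < s" "s < 1" and bound: "weight_bound s G"
  shows "weight_bound s G'"
proof (rule weight_bound_insert[OF s bound])
  fix r
  have x_slot: "x \<in> slots G" using x_leaf leaf_slots_subset by blast
  define \<rho> where "\<rho> mo m k = (if smom r mo x \<le> m \<and> k \<le> m
    then edge_weight s (m - smom r mo x) * edge_weight s k * edge_weight s (m - k)
      / edge_weight s (smom r mo x)
    else 0)" for mo m k
  show "(\<Sum>\<^sub>\<infinity>mo\<in>sym_admissible r G'. ennreal (leaf_weight s r G' mo))
      \<le> ennreal ((vertex_factor s)\<^sup>2) * (\<Sum>\<^sub>\<infinity>mo\<in>sym_admissible r G. ennreal (leaf_weight s r G mo))"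
  proof (rule sum_leaf_weight_insert_le[OF s restrict_I, where \<rho> = \<rho>
        and \<Phi> = "\<lambda>mo m k. (m, smom r mo x, k)"
        and \<Psi> = "\<lambda>mo m k. (m, smom r mo x, if sw then m - k else k)"])
    fix mo' S j k assume mo': "mo' \<in> sym_admissible r G'" and v: "mo' v = (S, j, k)"
    have x: "smom r (restrict_attr G mo') x = j"
      using attribution_I(4)[OF mo' v] x_slot by (simp add: smom_restrict_attr)
    show "mo' v = (S, smom r (restrict_attr G mo') x, k)
      \<and> mo' v' = (S, smom r (restrict_attr G mo') x, if sw then S - k else k)"
      using attribution_I(1)[OF mo' v] v x by simp
    show "leaf_weight s r G' mo' \<le> leaf_weight s r G (restrict_attr G mo') * \<rho> (restrict_attr G mo') S k"
      using leaf_weight_I[OF s mo' v] attribution_I(2,3)[OF mo' v] x by (simp add: \<rho>_def)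
  next
    show "0 \<le> \<rho> mo m k" for mo m k
      using edge_weight_pos[OF s] by (simp add: \<rho>_def less_imp_le)
    show "(\<Sum>(m, k)\<in>F. \<rho> mo m k) \<le> (vertex_factor s)\<^sup>2" if "finite F" for mo F
      using sum_edge_weight_melon_le[OF s that] by (simp add: \<rho>_def)
  qed
qed

end

locale melon_II = insertion +
  fixes z z' :: slot and sw :: bool
  assumes z_leaf: "z \<in> leaf_slots G" and dash_z: "gdash G z = z'"
    and par_old: "\<forall>u\<in>gV G. gpar G' u = gpar G u"
    and par_v: "gpar G' v = z" and par_v': "gpar G' v' = Ch v 2"
    and dash_2: "dpair G' (Ch v' 2) z'"
    and dash_3: "dpair G' (Ch v 3) (Ch v' (sg sw 3))" and dash_4: "dpair G' (Ch v 4) (Ch v' (sg sw 4))"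
    and dash_old: "\<forall>t\<in>leaf_slots G - {z, z'}. gdash G' t = gdash G t"
begin

lemma z'_leaf: "z' \<in> leaf_slots G" "z \<noteq> z'" "gdash G z' = z"
  using dashed_pairing z_leaf dash_z by (auto simp: pairing_on_def)

definition new_leaves :: "slot set" where
  "new_leaves = {Ch v 3, Ch v 4, Ch v' 2, Ch v' 3, Ch v' 4}"

lemma leaf_slots_II: "leaf_slots G' = (leaf_slots G - {z}) \<union> new_leaves"
proof -
  have "z \<in> slots G" "Ch v 2 \<notin> slots G"
    using z_leaf leaf_slots_subset new_slots_disjoint by (auto simp: new_slots_def)
  then have "new_slots v v' - {z, Ch v 2} = new_leaves" "leaf_slots G - {z, Ch v 2} = leaf_slots G - {z}"
    using new_slots_disjoint leaf_slots_subset new_vertices by (auto simp: new_slots_def new_leaves_def)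
  then show ?thesis using leaf_slots_insert[OF parent_image[OF par_old]] par_v par_v' by simp
qed

lemma wf_graph_II: "wf_graph G'"
proof (rule wf_graph_insertI)
  show "\<forall>u\<in>gV G'. gpar G' u \<in> slots G'"
  proof
    fix u assume "u \<in> gV G'"
    then consider "u = v" | "u = v'" | "u \<in> gV G" using vertices_insert by auto
    then show "gpar G' u \<in> slots G'"
      by cases (use par_v par_v' par_old parents_in_slots subsetD[OF leaf_slots_subset z_leaf]
          in \<open>auto simp: slots_insert new_slots_def\<close>)
  qed
  have "z' \<notin> new_leaves"
    using subsetD[OF leaf_slots_subset z'_leaf(1)] new_slots_disjoint
    unfolding new_leaves_def new_slots_def by blast
  then have new: "pairing_on (new_leaves \<union> {z'}) (gdash G')"
    using dash_2 dash_3 dash_4 new_vertices unfolding pairing_on_def new_leaves_def dpair_def sg_def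
    by (cases sw) (simp_all, blast+)
  have "\<forall>t\<in>{z, z'}. gdash G t \<in> {z, z'}" using dash_z z'_leaf by simp
  then have "pairing_on ((leaf_slots G - {z, z'}) \<union> (new_leaves \<union> {z'})) (gdash G')"
    by (rule pairing_on_Un_Diff[OF dashed_pairing new _ dash_old])
  moreover have "leaf_slots G' = (leaf_slots G - {z, z'}) \<union> (new_leaves \<union> {z'})"
    unfolding leaf_slots_II using z'_leaf(1,2) by blast
  ultimately show "pairing_on (leaf_slots G') (gdash G')" by simp
qed

lemma attribution_II:
  assumes mo': "mo' \<in> sym_admissible r G'" and v: "mo' v = (S, j, k)"
  shows "mo' v' = (S, S - j, if sw then S - k else k)" "j \<le> S" "k \<le> S"
    and "smom r mo' z = j" "smom r mo' z' = j"
proof -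
  obtain j' k' where v': "mo' v' = (S, j', k')"
    and bounds: "j \<le> S" "k \<le> S" "j' \<le> S" "k' \<le> S"
    and par: "j = smom r mo' (gpar G' v)" "j' = smom r mo' (gpar G' v')"
    using new_vertex_attribution[OF mo' v] by blast
  have leaves: "Ch v' 2 \<in> leaf_slots G'" "Ch v 3 \<in> leaf_slots G'"
    using leaf_slots_II by (auto simp: new_leaves_def)
  have "j' = S - j" using par(2) par_v' v by (simp add: emom_def)
  moreover have "smom r mo' (Ch v' 2) = smom r mo' z'"
    using sym_admissible_dashed[OF mo' leaves(1)] dash_2 by (simp add: dpair_def)
  moreover have "k' = (if sw then S - k else k)"
    using twisted_momenta[OF mo' v v' bounds(2,4) leaves(2) dash_3] .
  ultimately show "mo' v' = (S, S - j, if sw then S - k else k)" "j \<le> S" "k \<le> S"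
    and "smom r mo' z = j" "smom r mo' z' = j"
    using v' bounds par par_v by (simp_all add: emom_def)
qed

lemma restrict_II:
  assumes mo': "mo' \<in> sym_admissible r G'"
  shows "restrict_attr G mo' \<in> sym_admissible r G"
proof (rule restrict_sym_admissible[OF mo'])
  show "\<forall>u\<in>gV G. emom mo' u 1 = smom r mo' (gpar G u)"
    using mo' par_old vertices_insert by (simp add: sym_admissible_iff)
  have zz': "smom r mo' z = smom r mo' z'"
    using attribution_II(4,5)[OF mo'] by (metis prod_cases3)
  have other: "smom r mo' t = smom r mo' (gdash G t)" if "t \<in> leaf_slots G - {z, z'}" for t
    using that sym_admissible_dashed[OF mo'] leaf_slots_II dash_old by auto
  show "\<forall>t\<in>leaf_slots G. smom r mo' t = smom r mo' (gdash G t)"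
  proof
    fix t assume "t \<in> leaf_slots G"
    then consider "t = z" | "t = z'" | "t \<in> leaf_slots G - {z, z'}" by blast
    then show "smom r mo' t = smom r mo' (gdash G t)"
      by cases (use zz' other dash_z z'_leaf in auto)
  qed
qed

lemma leaf_weight_II:
  assumes s: "0 < s" "s < 1" and mo': "mo' \<in> sym_admissible r G'" and v: "mo' v = (S, j, k)"
  shows "leaf_weight s r G' mo' = leaf_weight s r G (restrict_attr G mo')
    * (edge_weight s k * edge_weight s (S - k))"
proof -
  let ?e = "end_weight s" let ?w = "\<lambda>t. ?e (smom r mo' t)"
  have new: "prod ?w new_leaves = ?e j * ((?e k * ?e k) * (?e (S - k) * ?e (S - k)))"
    using attribution_II[OF mo' v] v new_vertices by (auto simp: new_leaves_def emom_def mult_ac)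
  have "leaf_weight s r G' mo' * prod ?w {z}
      = leaf_weight s r G (restrict_attr G mo') * prod ?w new_leaves"
    using z_leaf new_slots_disjoint finite_vertices leaf_slots_II
    by (intro leaf_weight_split) (auto simp: new_slots_def new_leaves_def)
  then show ?thesis
    using end_weight_pos[OF s, of j] attribution_II(4)[OF mo' v] unfolding new end_weight_sq by simp
qed

lemma weight_bound_II:
  assumes s: "0 < s" "s < 1" and bound: "weight_bound s G"
  shows "weight_bound s G'"
proof (rule weight_bound_insert[OF s bound])
  fix r
  have z_slot: "z \<in> slots G" using z_leaf leaf_slots_subset by blast
  define \<rho> where "\<rho> m k = (if k \<le> m then edge_weight s k * edge_weight s (m - k) else 0)" for m k
  show "(\<Sum>\<^sub>\<infinity>mo\<in>sym_admissible r G'. ennreal (leaf_weight s r G' mo))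
      \<le> ennreal ((vertex_factor s)\<^sup>2) * (\<Sum>\<^sub>\<infinity>mo\<in>sym_admissible r G. ennreal (leaf_weight s r G mo))"
  proof (rule sum_leaf_weight_insert_le[OF s restrict_II, where \<rho> = "\<lambda>_. \<rho>"
        and \<Phi> = "\<lambda>mo m k. (m, smom r mo z, k)"
        and \<Psi> = "\<lambda>mo m k. (m, m - smom r mo z, if sw then m - k else k)"])
    fix mo' S j k assume mo': "mo' \<in> sym_admissible r G'" and v: "mo' v = (S, j, k)"
    have z: "smom r (restrict_attr G mo') z = j"
      using attribution_II(4)[OF mo' v] z_slot by (simp add: smom_restrict_attr)
    show "mo' v = (S, smom r (restrict_attr G mo') z, k)
      \<and> mo' v' = (S, S - smom r (restrict_attr G mo') z, if sw then S - k else k)"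
      using attribution_II(1)[OF mo' v] v z by simp
    show "leaf_weight s r G' mo' \<le> leaf_weight s r G (restrict_attr G mo') * \<rho> S k"
      using leaf_weight_II[OF s mo' v] attribution_II(3)[OF mo' v] by (simp add: \<rho>_def)
  next
    show "0 \<le> \<rho> m k" for m k
      using edge_weight_pos[OF s] by (simp add: \<rho>_def less_imp_le)
    show "(\<Sum>(m, k)\<in>F. \<rho> m k) \<le> (vertex_factor s)\<^sup>2" if "finite F" for F
      using sum_edge_weight_split_le[OF s that] by (simp add: \<rho>_def)
  qed
qed

end

locale melon_III = insertion +
  fixes z z' :: slot and a c :: nat
  assumes z_leaf: "z \<in> leaf_slots G" and dash_z: "gdash G z = z'"
    and a: "a \<in> {3, 4}" and c: "c \<in> {3, 4}"
    and par_old: "\<forall>u\<in>gV G. gpar G' u = gpar G u"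
    and par_v: "gpar G' v = z" and par_v': "gpar G' v' = Ch v a"
    and dash_2: "dpair G' (Ch v 2) (Ch v' c)" and dash_a: "dpair G' (Ch v (7 - a)) (Ch v' 2)"
    and dash_c: "dpair G' (Ch v' (7 - c)) z'"
    and dash_old: "\<forall>t\<in>leaf_slots G - {z, z'}. gdash G' t = gdash G t"
begin

lemma z'_leaf: "z' \<in> leaf_slots G" "z \<noteq> z'" "gdash G z' = z"
  using dashed_pairing z_leaf dash_z by (auto simp: pairing_on_def)

definition new_leaves :: "slot set" where
  "new_leaves = {Ch v 2, Ch v (7 - a), Ch v' 2, Ch v' 3, Ch v' 4}"

lemma leaf_slots_III: "leaf_slots G' = (leaf_slots G - {z}) \<union> new_leaves"
proof -
  have "z \<in> slots G" "Ch v a \<notin> slots G"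
    using z_leaf leaf_slots_subset new_slots_disjoint a by (auto simp: new_slots_def)
  then have "new_slots v v' - {z, Ch v a} = new_leaves" "leaf_slots G - {z, Ch v a} = leaf_slots G - {z}"
    using new_slots_disjoint leaf_slots_subset new_vertices a by (auto simp: new_slots_def new_leaves_def)
  then show ?thesis using leaf_slots_insert[OF parent_image[OF par_old]] par_v par_v' by simp
qed

lemma wf_graph_III: "wf_graph G'"
proof (rule wf_graph_insertI)
  show "\<forall>u\<in>gV G'. gpar G' u \<in> slots G'"
  proof
    fix u assume "u \<in> gV G'"
    then consider "u = v" | "u = v'" | "u \<in> gV G" using vertices_insert by auto
    then show "gpar G' u \<in> slots G'"
      by cases (use a par_v par_v' par_old parents_in_slots subsetD[OF leaf_slots_subset z_leaf] in
          \<open>auto simp: slots_insert new_slots_def\<close>)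
  qed
  have "z' \<notin> new_leaves"
    using subsetD[OF leaf_slots_subset z'_leaf(1)] new_slots_disjoint a
    unfolding new_leaves_def new_slots_def by auto
  then have new: "pairing_on (new_leaves \<union> {z'}) (gdash G')"
    using dash_2 dash_a dash_c new_vertices a c unfolding pairing_on_def new_leaves_def dpair_def
    by auto
  have "\<forall>t\<in>{z, z'}. gdash G t \<in> {z, z'}" using dash_z z'_leaf by simp
  then have "pairing_on ((leaf_slots G - {z, z'}) \<union> (new_leaves \<union> {z'})) (gdash G')"
    by (rule pairing_on_Un_Diff[OF dashed_pairing new _ dash_old])
  moreover have "leaf_slots G' = (leaf_slots G - {z, z'}) \<union> (new_leaves \<union> {z'})"
    unfolding leaf_slots_III using z'_leaf(1,2) by blast
  ultimately show "pairing_on (leaf_slots G') (gdash G')" by simp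
qed

lemma attribution_III:
  assumes mo': "mo' \<in> sym_admissible r G'" and v: "mo' v = (S, j, k)"
  shows "mo' v' = (S, if a = 3 then k else S - k, if c = 3 then S - j else j)" "j \<le> S" "k \<le> S"
    and "smom r mo' z = j" "smom r mo' z' = j"
proof -
  obtain j' k' where v': "mo' v' = (S, j', k')"
    and bounds: "j \<le> S" "k \<le> S" "j' \<le> S" "k' \<le> S"
    and par: "j = smom r mo' (gpar G' v)" "j' = smom r mo' (gpar G' v')"
    using new_vertex_attribution[OF mo' v] by blast
  have "Ch v 2 \<in> new_leaves" "Ch v' (7 - c) \<in> new_leaves"
    using c by (auto simp: new_leaves_def)
  then have leaves: "Ch v 2 \<in> leaf_slots G'" "Ch v' (7 - c) \<in> leaf_slots G'"
    unfolding leaf_slots_III by blast+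
  have j': "j' = (if a = 3 then k else S - k)"
    using par(2) par_v' v a by (auto simp: emom_def)
  have "S - j = (if c = 3 then k' else S - k')"
    using sym_admissible_dashed[OF mo' leaves(1)] dash_2 v v' c by (auto simp: dpair_def emom_def)
  then have k': "k' = (if c = 3 then S - j else j)"
    using bounds by (cases "c = 3") auto
  have "smom r mo' z' = (if c = 3 then S - k' else k')"
    using sym_admissible_dashed[OF mo' leaves(2)] dash_c v' c by (auto simp: dpair_def emom_def)
  then show "smom r mo' z' = j"
    using k' bounds by (cases "c = 3") auto
  show "mo' v' = (S, if a = 3 then k else S - k, if c = 3 then S - j else j)"
    using v' j' k' by simp
  show "j \<le> S" "k \<le> S" "smom r mo' z = j" using bounds par par_v by simp_all
qed

lemma restrict_III:
  assumes mo': "mo' \<in> sym_admissible r G'"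
  shows "restrict_attr G mo' \<in> sym_admissible r G"
proof (rule restrict_sym_admissible[OF mo'])
  show "\<forall>u\<in>gV G. emom mo' u 1 = smom r mo' (gpar G u)"
    using mo' par_old vertices_insert by (simp add: sym_admissible_iff)
  have zz': "smom r mo' z = smom r mo' z'"
    using attribution_III(4,5)[OF mo'] by (metis prod_cases3)
  have other: "smom r mo' t = smom r mo' (gdash G t)" if "t \<in> leaf_slots G - {z, z'}" for t
    using that sym_admissible_dashed[OF mo'] leaf_slots_III dash_old by auto
  show "\<forall>t\<in>leaf_slots G. smom r mo' t = smom r mo' (gdash G t)"
  proof
    fix t assume "t \<in> leaf_slots G"
    then consider "t = z" | "t = z'" | "t \<in> leaf_slots G - {z, z'}" by blast
    then show "smom r mo' t = smom r mo' (gdash G t)"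
      by cases (use zz' other dash_z z'_leaf in auto)
  qed
qed

lemma leaf_weight_III:
  assumes s: "0 < s" "s < 1" and mo': "mo' \<in> sym_admissible r G'" and v: "mo' v = (S, j, k)"
  shows "leaf_weight s r G' mo' = leaf_weight s r G (restrict_attr G mo')
    * (edge_weight s (S - j) * edge_weight s (if a = 4 then k else S - k))"
proof -
  let ?e = "end_weight s" let ?w = "\<lambda>t. ?e (smom r mo' t)"
  let ?b = "if a = 4 then k else S - k"
  have new: "prod ?w new_leaves = ?e j * ((?e (S - j) * ?e (S - j)) * (?e ?b * ?e ?b))"
    using attribution_III[OF mo' v] v new_vertices a c by (auto simp: new_leaves_def emom_def mult_ac)
  have "leaf_weight s r G' mo' * prod ?w {z}
      = leaf_weight s r G (restrict_attr G mo') * prod ?w new_leaves"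
    using z_leaf new_slots_disjoint finite_vertices leaf_slots_III a
    by (intro leaf_weight_split) (auto simp: new_slots_def new_leaves_def)
  then show ?thesis
    using end_weight_pos[OF s, of j] attribution_III(4)[OF mo' v] unfolding new end_weight_sq by simp
qed

lemma weight_bound_III:
  assumes s: "0 < s" "s < 1" and bound: "weight_bound s G"
  shows "weight_bound s G'"
proof (rule weight_bound_insert[OF s bound])
  fix r
  have z_slot: "z \<in> slots G" using z_leaf leaf_slots_subset by blast
  define \<rho> where "\<rho> mo m k = (if smom r mo z \<le> m \<and> k \<le> m
    then edge_weight s (m - smom r mo z) * edge_weight s (if a = 4 then k else m - k) else 0)" for mo m k
  show "(\<Sum>\<^sub>\<infinity>mo\<in>sym_admissible r G'. ennreal (leaf_weight s r G' mo))
      \<le> ennreal ((vertex_factor s)\<^sup>2) * (\<Sum>\<^sub>\<infinity>mo\<in>sym_admissible r G. ennreal (leaf_weight s r G mo))"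
  proof (rule sum_leaf_weight_insert_le[OF s restrict_III, where \<rho> = \<rho>
        and \<Phi> = "\<lambda>mo m k. (m, smom r mo z, k)"
        and \<Psi> = "\<lambda>mo m k. (m, if a = 3 then k else m - k, if c = 3 then m - smom r mo z else smom r mo z)"])
    fix mo' S j k assume mo': "mo' \<in> sym_admissible r G'" and v: "mo' v = (S, j, k)"
    have z: "smom r (restrict_attr G mo') z = j"
      using attribution_III(4)[OF mo' v] z_slot by (simp add: smom_restrict_attr)
    show "mo' v = (S, smom r (restrict_attr G mo') z, k) \<and> mo' v' = (S, if a = 3 then k else S - k,
        if c = 3 then S - smom r (restrict_attr G mo') z else smom r (restrict_attr G mo') z)"
      using attribution_III(1)[OF mo' v] v z by simp
    show "leaf_weight s r G' mo' \<le> leaf_weight s r G (restrict_attr G mo') * \<rho> (restrict_attr G mo') S k"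
      using leaf_weight_III[OF s mo' v] attribution_III(2,3)[OF mo' v] z by (simp add: \<rho>_def)
  next
    show "0 \<le> \<rho> mo m k" for mo m k
      using edge_weight_pos[OF s] by (simp add: \<rho>_def less_imp_le)
    show "(\<Sum>(m, k)\<in>F. \<rho> mo m k) \<le> (vertex_factor s)\<^sup>2" if "finite F" for mo F
      using sum_edge_weight_shifted_le[OF s that, of "smom r mo z" "a = 4"] by (simp add: \<rho>_def)
  qed
qed

end

locale melon_IIs = insertion +
  fixes z :: nat and sw :: bool
  assumes z_vertex: "z \<in> gV G"
    and par_old: "\<forall>u\<in>gV G - {z}. gpar G' u = gpar G u" and par_v: "gpar G' v = gpar G z"
    and par_v': "gpar G' v' = Ch v 2" and par_z: "gpar G' z = Ch v' 2"
    and dash_3: "dpair G' (Ch v 3) (Ch v' (sg sw 3))" and dash_4: "dpair G' (Ch v 4) (Ch v' (sg sw 4))"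
    and dash_old: "\<forall>t\<in>leaf_slots G. gdash G' t = gdash G t"
begin

definition new_leaves :: "slot set" where
  "new_leaves = {Ch v 3, Ch v 4, Ch v' 3, Ch v' 4}"

lemma z_parent_slot: "gpar G z \<in> slots G"
  using z_vertex parents_in_slots by blast

lemma leaf_slots_IIs: "leaf_slots G' = leaf_slots G \<union> new_leaves"
proof -
  have "{Ch v 2, Ch v' 2} \<inter> slots G = {}"
    using new_slots_disjoint by (auto simp: new_slots_def)
  then have "new_slots v v' - {Ch v 2, Ch v' 2} = new_leaves"
    "leaf_slots G - {Ch v 2, Ch v' 2} = leaf_slots G"
    using leaf_slots_subset new_vertices by (auto simp: new_slots_def new_leaves_def)
  then show ?thesis
    using leaf_slots_insert[OF parent_image_subdivided[OF z_vertex par_old par_v]] par_v' par_z by simp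
qed

lemma wf_graph_IIs: "wf_graph G'"
proof (rule wf_graph_insertI)
  show "\<forall>u\<in>gV G'. gpar G' u \<in> slots G'"
  proof
    fix u assume "u \<in> gV G'"
    then consider "u = v" | "u = v'" | "u = z" | "u \<in> gV G - {z}" using vertices_insert by auto
    then show "gpar G' u \<in> slots G'"
      by cases (use par_v par_v' par_z par_old parents_in_slots z_parent_slot in
          \<open>auto simp: slots_insert new_slots_def\<close>)
  qed
  have "pairing_on new_leaves (gdash G')"
    using dash_3 dash_4 new_vertices
    by (cases sw) (auto simp: pairing_on_def new_leaves_def dpair_def sg_def)
  then have "pairing_on ((leaf_slots G - {}) \<union> new_leaves) (gdash G')"
    by (rule pairing_on_Un_Diff[OF dashed_pairing]) (use dash_old in auto)
  then show "pairing_on (leaf_slots G') (gdash G')" by (simp add: leaf_slots_IIs)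
qed

lemma attribution_IIs:
  assumes mo': "mo' \<in> sym_admissible r G'" and v: "mo' v = (S, j, k)"
  shows "mo' v' = (S, S - j, if sw then S - k else k)" "j \<le> S" "k \<le> S"
    and "smom r mo' (gpar G z) = j" "emom mo' z 1 = j"
proof -
  obtain j' k' where v': "mo' v' = (S, j', k')"
    and bounds: "j \<le> S" "k \<le> S" "j' \<le> S" "k' \<le> S"
    and par: "j = smom r mo' (gpar G' v)" "j' = smom r mo' (gpar G' v')"
    using new_vertex_attribution[OF mo' v] by blast
  have leaf: "Ch v 3 \<in> leaf_slots G'" unfolding leaf_slots_IIs new_leaves_def by blast
  have j': "j' = S - j" using par(2) par_v' v by (simp add: emom_def)
  have "emom mo' z 1 = smom r mo' (gpar G' z)"
    using mo' z_vertex vertices_insert by (simp add: sym_admissible_iff)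
  then show "emom mo' z 1 = j" using par_z v' j' bounds by (simp add: emom_def)
  have "k' = (if sw then S - k else k)"
    using twisted_momenta[OF mo' v v' bounds(2,4) leaf dash_3] .
  then show "mo' v' = (S, S - j, if sw then S - k else k)" using v' j' by simp
  show "j \<le> S" "k \<le> S" "smom r mo' (gpar G z) = j" using bounds par par_v by simp_all
qed

lemma restrict_IIs:
  assumes mo': "mo' \<in> sym_admissible r G'"
  shows "restrict_attr G mo' \<in> sym_admissible r G"
proof (rule restrict_sym_admissible[OF mo'])
  have "emom mo' z 1 = smom r mo' (gpar G z)"
    using attribution_IIs(4,5)[OF mo'] by (metis prod_cases3)
  moreover have "emom mo' u 1 = smom r mo' (gpar G u)" if "u \<in> gV G - {z}" for u
    using that mo' par_old vertices_insert by (simp add: sym_admissible_iff)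
  ultimately show "\<forall>u\<in>gV G. emom mo' u 1 = smom r mo' (gpar G u)" by blast
  show "\<forall>t\<in>leaf_slots G. smom r mo' t = smom r mo' (gdash G t)"
    using sym_admissible_dashed[OF mo'] dash_old unfolding leaf_slots_IIs by blast
qed

lemma leaf_weight_IIs:
  assumes mo': "mo' \<in> sym_admissible r G'" and v: "mo' v = (S, j, k)"
  shows "leaf_weight s r G' mo' = leaf_weight s r G (restrict_attr G mo')
    * (edge_weight s k * edge_weight s (S - k))"
proof -
  let ?e = "end_weight s" let ?w = "\<lambda>t. ?e (smom r mo' t)"
  have new: "prod ?w new_leaves = (?e k * ?e k) * (?e (S - k) * ?e (S - k))"
    using attribution_IIs[OF mo' v] v new_vertices by (auto simp: new_leaves_def emom_def mult_ac)
  have "leaf_weight s r G' mo' * prod ?w {}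
      = leaf_weight s r G (restrict_attr G mo') * prod ?w new_leaves"
    using new_slots_disjoint finite_vertices leaf_slots_IIs
    by (intro leaf_weight_split) (auto simp: new_slots_def new_leaves_def)
  then show ?thesis unfolding new end_weight_sq by simp
qed

lemma weight_bound_IIs:
  assumes s: "0 < s" "s < 1" and bound: "weight_bound s G"
  shows "weight_bound s G'"
proof (rule weight_bound_insert[OF s bound])
  fix r
  define \<rho> where "\<rho> m k = (if k \<le> m then edge_weight s k * edge_weight s (m - k) else 0)" for m k
  show "(\<Sum>\<^sub>\<infinity>mo\<in>sym_admissible r G'. ennreal (leaf_weight s r G' mo))
      \<le> ennreal ((vertex_factor s)\<^sup>2) * (\<Sum>\<^sub>\<infinity>mo\<in>sym_admissible r G. ennreal (leaf_weight s r G mo))"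
  proof (rule sum_leaf_weight_insert_le[OF s restrict_IIs, where \<rho> = "\<lambda>_. \<rho>"
        and \<Phi> = "\<lambda>mo m k. (m, smom r mo (gpar G z), k)"
        and \<Psi> = "\<lambda>mo m k. (m, m - smom r mo (gpar G z), if sw then m - k else k)"])
    fix mo' S j k assume mo': "mo' \<in> sym_admissible r G'" and v: "mo' v = (S, j, k)"
    have z: "smom r (restrict_attr G mo') (gpar G z) = j"
      using attribution_IIs(4)[OF mo' v] z_parent_slot by (simp add: smom_restrict_attr)
    show "mo' v = (S, smom r (restrict_attr G mo') (gpar G z), k)
      \<and> mo' v' = (S, S - smom r (restrict_attr G mo') (gpar G z), if sw then S - k else k)"
      using attribution_IIs(1)[OF mo' v] v z by simp
    show "leaf_weight s r G' mo' \<le> leaf_weight s r G (restrict_attr G mo') * \<rho> S k"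
      using leaf_weight_IIs[OF mo' v] attribution_IIs(3)[OF mo' v] by (simp add: \<rho>_def)
  next
    show "0 \<le> \<rho> m k" for m k
      using edge_weight_pos[OF s] by (simp add: \<rho>_def less_imp_le)
    show "(\<Sum>(m, k)\<in>F. \<rho> m k) \<le> (vertex_factor s)\<^sup>2" if "finite F" for F
      using sum_edge_weight_split_le[OF s that] by (simp add: \<rho>_def)
  qed
qed

end

locale melon_IIIs = insertion +
  fixes z :: nat and a c :: nat
  assumes z_vertex: "z \<in> gV G" and a: "a \<in> {3, 4}" and c: "c \<in> {3, 4}"
    and par_old: "\<forall>u\<in>gV G - {z}. gpar G' u = gpar G u" and par_v: "gpar G' v = gpar G z"
    and par_v': "gpar G' v' = Ch v a" and par_z: "gpar G' z = Ch v' c"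
    and dash_2: "dpair G' (Ch v 2) (Ch v' (7 - c))" and dash_a: "dpair G' (Ch v (7 - a)) (Ch v' 2)"
    and dash_old: "\<forall>t\<in>leaf_slots G. gdash G' t = gdash G t"
begin

definition new_leaves :: "slot set" where
  "new_leaves = {Ch v 2, Ch v (7 - a), Ch v' 2, Ch v' (7 - c)}"

lemma z_parent_slot: "gpar G z \<in> slots G"
  using z_vertex parents_in_slots by blast

lemma leaf_slots_IIIs: "leaf_slots G' = leaf_slots G \<union> new_leaves"
proof -
  have "{Ch v a, Ch v' c} \<inter> slots G = {}"
    using new_slots_disjoint a c by (auto simp: new_slots_def)
  then have "new_slots v v' - {Ch v a, Ch v' c} = new_leaves"
    "leaf_slots G - {Ch v a, Ch v' c} = leaf_slots G"
    using leaf_slots_subset new_vertices a c by (auto simp: new_slots_def new_leaves_def)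
  then show ?thesis
    using leaf_slots_insert[OF parent_image_subdivided[OF z_vertex par_old par_v]] par_v' par_z by simp
qed

lemma wf_graph_IIIs: "wf_graph G'"
proof (rule wf_graph_insertI)
  show "\<forall>u\<in>gV G'. gpar G' u \<in> slots G'"
  proof
    fix u assume "u \<in> gV G'"
    then consider "u = v" | "u = v'" | "u = z" | "u \<in> gV G - {z}" using vertices_insert by auto
    then show "gpar G' u \<in> slots G'"
      by cases (use a c par_v par_v' par_z par_old parents_in_slots z_parent_slot in
          \<open>auto simp: slots_insert new_slots_def\<close>)
  qed
  have "pairing_on new_leaves (gdash G')"
    using dash_2 dash_a new_vertices a c by (auto simp: pairing_on_def new_leaves_def dpair_def)
  then have "pairing_on ((leaf_slots G - {}) \<union> new_leaves) (gdash G')"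
    by (rule pairing_on_Un_Diff[OF dashed_pairing]) (use dash_old in auto)
  then show "pairing_on (leaf_slots G') (gdash G')" by (simp add: leaf_slots_IIIs)
qed

lemma attribution_IIIs:
  assumes mo': "mo' \<in> sym_admissible r G'" and v: "mo' v = (S, j, k)"
  shows "mo' v' = (S, if a = 3 then k else S - k, if c = 3 then j else S - j)" "j \<le> S" "k \<le> S"
    and "smom r mo' (gpar G z) = j" "emom mo' z 1 = j"
proof -
  obtain j' k' where v': "mo' v' = (S, j', k')"
    and bounds: "j \<le> S" "k \<le> S" "j' \<le> S" "k' \<le> S"
    and par: "j = smom r mo' (gpar G' v)" "j' = smom r mo' (gpar G' v')"
    using new_vertex_attribution[OF mo' v] by blast
  have leaf: "Ch v 2 \<in> leaf_slots G'" unfolding leaf_slots_IIIs new_leaves_def by blast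
  have j': "j' = (if a = 3 then k else S - k)"
    using par(2) par_v' v a by (auto simp: emom_def)
  have "S - j = (if c = 3 then S - k' else k')"
    using sym_admissible_dashed[OF mo' leaf] dash_2 v v' c by (auto simp: dpair_def emom_def)
  then have k': "k' = (if c = 3 then j else S - j)"
    using bounds by (cases "c = 3") auto
  have "emom mo' z 1 = smom r mo' (gpar G' z)"
    using mo' z_vertex vertices_insert by (simp add: sym_admissible_iff)
  then have "emom mo' z 1 = (if c = 3 then k' else S - k')"
    using par_z v' c by (auto simp: emom_def)
  then show "emom mo' z 1 = j"
    using k' bounds by (cases "c = 3") auto
  show "mo' v' = (S, if a = 3 then k else S - k, if c = 3 then j else S - j)"
    using v' j' k' by simp
  show "j \<le> S" "k \<le> S" "smom r mo' (gpar G z) = j" using bounds par par_v by simp_all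
qed

lemma restrict_IIIs:
  assumes mo': "mo' \<in> sym_admissible r G'"
  shows "restrict_attr G mo' \<in> sym_admissible r G"
proof (rule restrict_sym_admissible[OF mo'])
  have "emom mo' z 1 = smom r mo' (gpar G z)"
    using attribution_IIIs(4,5)[OF mo'] by (metis prod_cases3)
  moreover have "emom mo' u 1 = smom r mo' (gpar G u)" if "u \<in> gV G - {z}" for u
    using that mo' par_old vertices_insert by (simp add: sym_admissible_iff)
  ultimately show "\<forall>u\<in>gV G. emom mo' u 1 = smom r mo' (gpar G u)" by blast
  show "\<forall>t\<in>leaf_slots G. smom r mo' t = smom r mo' (gdash G t)"
    using sym_admissible_dashed[OF mo'] dash_old unfolding leaf_slots_IIIs by blast
qed

lemma leaf_weight_IIIs:
  assumes mo': "mo' \<in> sym_admissible r G'" and v: "mo' v = (S, j, k)"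
  shows "leaf_weight s r G' mo' = leaf_weight s r G (restrict_attr G mo')
    * (edge_weight s (S - j) * edge_weight s (if a = 4 then k else S - k))"
proof -
  let ?e = "end_weight s" let ?w = "\<lambda>t. ?e (smom r mo' t)"
  let ?b = "if a = 4 then k else S - k"
  have new: "prod ?w new_leaves = (?e (S - j) * ?e (S - j)) * (?e ?b * ?e ?b)"
    using attribution_IIIs[OF mo' v] v new_vertices a c by (auto simp: new_leaves_def emom_def mult_ac)
  have "leaf_weight s r G' mo' * prod ?w {}
      = leaf_weight s r G (restrict_attr G mo') * prod ?w new_leaves"
    using new_slots_disjoint finite_vertices leaf_slots_IIIs a c
    by (intro leaf_weight_split) (auto simp: new_slots_def new_leaves_def)
  then show ?thesis unfolding new end_weight_sq by simp
qed

lemma weight_bound_IIIs: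
  assumes s: "0 < s" "s < 1" and bound: "weight_bound s G"
  shows "weight_bound s G'"
proof (rule weight_bound_insert[OF s bound])
  fix r
  define \<rho> where "\<rho> mo m k = (if smom r mo (gpar G z) \<le> m \<and> k \<le> m
    then edge_weight s (m - smom r mo (gpar G z)) * edge_weight s (if a = 4 then k else m - k) else 0)"
    for mo m k
  show "(\<Sum>\<^sub>\<infinity>mo\<in>sym_admissible r G'. ennreal (leaf_weight s r G' mo))
      \<le> ennreal ((vertex_factor s)\<^sup>2) * (\<Sum>\<^sub>\<infinity>mo\<in>sym_admissible r G. ennreal (leaf_weight s r G mo))"
  proof (rule sum_leaf_weight_insert_le[OF s restrict_IIIs, where \<rho> = \<rho>
        and \<Phi> = "\<lambda>mo m k. (m, smom r mo (gpar G z), k)"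
        and \<Psi> = "\<lambda>mo m k. (m, if a = 3 then k else m - k,
          if c = 3 then smom r mo (gpar G z) else m - smom r mo (gpar G z))"])
    fix mo' S j k assume mo': "mo' \<in> sym_admissible r G'" and v: "mo' v = (S, j, k)"
    have z: "smom r (restrict_attr G mo') (gpar G z) = j"
      using attribution_IIIs(4)[OF mo' v] z_parent_slot by (simp add: smom_restrict_attr)
    show "mo' v = (S, smom r (restrict_attr G mo') (gpar G z), k) \<and> mo' v' = (S, if a = 3 then k else S - k,
        if c = 3 then smom r (restrict_attr G mo') (gpar G z)
        else S - smom r (restrict_attr G mo') (gpar G z))"
      using attribution_IIIs(1)[OF mo' v] v z by simp
    show "leaf_weight s r G' mo' \<le> leaf_weight s r G (restrict_attr G mo') * \<rho> (restrict_attr G mo') S k"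
      using leaf_weight_IIIs[OF mo' v] attribution_IIIs(2,3)[OF mo' v] z by (simp add: \<rho>_def)
  next
    show "0 \<le> \<rho> mo m k" for mo m k
      using edge_weight_pos[OF s] by (simp add: \<rho>_def less_imp_le)
    show "(\<Sum>(m, k)\<in>F. \<rho> mo m k) \<le> (vertex_factor s)\<^sup>2" if "finite F" for mo F
      using sum_edge_weight_shifted_le[OF s that, of "smom r mo (gpar G z)" "a = 4"] by (simp add: \<rho>_def)
  qed
qed

end

section \<open>Melonic graphs and the amplitude bound\<close>

lemma wf_graph_trivial:
  assumes "gV G = {}" and "gdash G RootA = RootB" and "gdash G RootB = RootA"
  shows "wf_graph G"
  using assms by (auto simp: wf_graph_def pairing_on_def leaf_slots_def slots_def)

lemma weight_bound_trivial:
  assumes s: "0 < s" "s < 1" and empty: "gV G = {}"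
  shows "weight_bound s G"
  unfolding weight_bound_def
proof
  fix r
  let ?zero = "\<lambda>_ :: nat. (0 :: nat, 0 :: nat, 0 :: nat)"
  have "leaf_slots G = {RootA, RootB}" using empty by (auto simp: leaf_slots_def slots_def)
  then have weight: "leaf_weight s r G ?zero = edge_weight s r"
    by (simp add: leaf_weight_def end_weight_sq)
  have "sym_admissible r G \<subseteq> {?zero}" using empty by (auto simp: sym_admissible_iff)
  then have "(\<Sum>\<^sub>\<infinity>mo\<in>sym_admissible r G. ennreal (leaf_weight s r G mo))
      \<le> (\<Sum>\<^sub>\<infinity>mo\<in>{?zero}. ennreal (leaf_weight s r G mo))"
    by (intro infsum_mono_neutral) (auto intro: nonneg_summable_on_complete)
  then show "(\<Sum>\<^sub>\<infinity>mo\<in>sym_admissible r G. ennreal (leaf_weight s r G mo))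
      \<le> ennreal (vertex_factor s ^ card (gV G) * edge_weight s r)"
    using weight empty by simp
qed

lemma melonic_wf_graph: "melonic G \<Longrightarrow> wf_graph G"
proof (induction rule: melonic.induct)
  case (trivial G) then show ?case by (rule wf_graph_trivial)
next
  case (insI G x y v v' G' sw)
  interpret melon_I G G' v v' x y sw by unfold_locales (use insI in auto)
  show ?case by (rule wf_graph_I)
next
  case (insII G z z' v v' G' sw)
  interpret melon_II G G' v v' z z' sw by unfold_locales (use insII in auto)
  show ?case by (rule wf_graph_II)
next
  case (insIII G z z' v v' a c G')
  interpret melon_III G G' v v' z z' a c by unfold_locales (use insIII in auto)
  show ?case by (rule wf_graph_III)
next
  case (insIIs G z v v' G' sw)
  interpret melon_IIs G G' v v' z sw by unfold_locales (use insIIs in auto)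
  show ?case by (rule wf_graph_IIs)
next
  case (insIIIs G z v v' a c G')
  interpret melon_IIIs G G' v v' z a c by unfold_locales (use insIIIs in auto)
  show ?case by (rule wf_graph_IIIs)
qed

lemma melonic_weight_bound:
  assumes "melonic G" and s: "0 < s" "s < 1"
  shows "weight_bound s G"
  using assms(1)
proof (induction rule: melonic.induct)
  case (trivial G) then show ?case by (intro weight_bound_trivial s)
next
  case (insI G x y v v' G' sw)
  interpret melon_I G G' v v' x y sw by unfold_locales (use insI melonic_wf_graph in auto)
  show ?case using s insI.IH by (rule weight_bound_I)
next
  case (insII G z z' v v' G' sw)
  interpret melon_II G G' v v' z z' sw by unfold_locales (use insII melonic_wf_graph in auto)
  show ?case using s insII.IH by (rule weight_bound_II)
next
  case (insIII G z z' v v' a c G')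
  interpret melon_III G G' v v' z z' a c by unfold_locales (use insIII melonic_wf_graph in auto)
  show ?case using s insIII.IH by (rule weight_bound_III)
next
  case (insIIs G z v v' G' sw)
  interpret melon_IIs G G' v v' z sw by unfold_locales (use insIIs melonic_wf_graph in auto)
  show ?case using s insIIs.IH by (rule weight_bound_IIs)
next
  case (insIIIs G z v v' a c G')
  interpret melon_IIIs G G' v v' z a c by unfold_locales (use insIIIs melonic_wf_graph in auto)
  show ?case using s insIIIs.IH by (rule weight_bound_IIIs)
qed

lemma sty_child:
  assumes "u \<in> gV G" and "i \<in> {2, 3, 4}" and "sty G (gpar G u) b"
  shows "\<exists>b'. sty G (Ch u i) b'"
proof (cases "i = 2")
  case True then show ?thesis using sty.intros(3)[OF assms(1,3)] by blast
next
  case False then show ?thesis using sty.intros(4)[OF assms(1,3)] assms(2) by blast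
qed

lemma sty_exists:
  assumes G: "is_graph n G" and t: "t \<in> slots G"
  shows "\<exists>b. sty G t b"
proof -
  have parents: "\<forall>u\<in>gV G. gpar G u \<in> slots G" and heap: "\<forall>u\<in>gV G. \<forall>w i. gpar G u = Ch w i \<longrightarrow> w < u"
    using G by (auto simp: is_graph_def)
  have parent_typed: "u \<in> gV G \<Longrightarrow> \<exists>b. sty G (gpar G u) b" for u
  proof (induction u rule: less_induct)
    case (less u)
    show ?case
    proof (cases "gpar G u")
      case (Ch w i)
      then have w: "w \<in> gV G" "i \<in> {2, 3, 4}" "w < u"
        using parents heap less.prems by (auto simp: Ch_in_slots_iff)
      then obtain b where "sty G (gpar G w) b" using less.IH by blast
      then show ?thesis using sty_child[OF w(1,2)] Ch by simp
    qed (auto intro: sty.intros)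
  qed
  show ?thesis
  proof (cases t)
    case (Ch u i)
    then have u: "u \<in> gV G" "i \<in> {2, 3, 4}" using t by (auto simp: Ch_in_slots_iff)
    then obtain b where "sty G (gpar G u) b" using parent_typed by blast
    then show ?thesis using sty_child[OF u] Ch by simp
  qed (auto intro: sty.intros)
qed

lemma leaf_slots_eq_lvs:
  assumes "is_graph n G"
  shows "leaf_slots G = lvs G True \<union> lvs G False"
proof
  show "leaf_slots G \<subseteq> lvs G True \<union> lvs G False"
  proof
    fix x assume x: "x \<in> leaf_slots G"
    then obtain b where "sty G x b" using sty_exists[OF assms] leaf_slots_subset by blast
    then show "x \<in> lvs G True \<union> lvs G False" using x by (cases b) (simp_all add: lvs_def)
  qed
qed (auto simp: lvs_def)

lemma admissible_subset_sym_admissible: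
  assumes G: "is_graph n G"
  shows "admissible r G \<subseteq> sym_admissible r G"
proof
  fix mo assume mo: "mo \<in> admissible r G"
  have bij: "bij_betw (gdash G) (lvs G True) (lvs G False)"
    and inv: "\<forall>x\<in>lvs G True. gdash G (gdash G x) = x"
    using G by (simp_all add: is_graph_def)
  have dashed: "\<forall>x\<in>lvs G True. smom r mo x = smom r mo (gdash G x)"
    using mo by (simp add: admissible_def)
  have "smom r mo x = smom r mo (gdash G x)" if x: "x \<in> lvs G False" for x
  proof -
    obtain y where "y \<in> lvs G True" "x = gdash G y" using bij x unfolding bij_betw_def by blast
    then show ?thesis using dashed inv by simp
  qed
  then have "\<forall>x\<in>lvs G True \<union> lvs G False. smom r mo x = smom r mo (gdash G x)"
    using dashed by blast
  then show "mo \<in> sym_admissible r G"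
    using mo by (simp add: sym_admissible_def leaf_slots_eq_lvs[OF G])
qed

lemma leaf_power_le_leaf_weight:
  assumes s: "0 < s" "s < 1" and G: "is_graph n G" and mo: "mo \<in> admissible r G"
  shows "(\<Prod>x\<in>lvs G True. (s ^ 4) ^ smom r mo x) \<le> leaf_weight s r G mo"
proof -
  let ?w = "\<lambda>x. end_weight s (smom r mo x)"
  let ?T = "lvs G True" and ?F = "lvs G False"
  have leaves: "leaf_slots G = ?T \<union> ?F" by (rule leaf_slots_eq_lvs[OF G])
  have "finite (leaf_slots G)" using G by (intro finite_leaf_slots) (simp add: is_graph_def)
  then have fin: "finite ?T" "finite ?F" using leaves by simp_all
  have w_bounds: "0 \<le> ?w x" "?w x \<le> 1" for x
    using end_weight_pos[OF s] end_weight_le_1[OF s] by (auto intro: less_imp_le)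
  have "prod ?w ?F = prod (\<lambda>x. ?w (gdash G x)) ?T"
    by (rule prod.reindex_bij_betw[symmetric]) (use G in \<open>simp add: is_graph_def\<close>)
  also have "\<dots> = prod ?w ?T"
    using mo by (intro prod.cong) (auto simp: admissible_def)
  finally have F_eq_T: "prod ?w ?F = prod ?w ?T" .
  have "(\<Prod>x\<in>?T. (s ^ 4) ^ smom r mo x) \<le> (\<Prod>x\<in>?T. edge_weight s (smom r mo x))"
    using edge_weight_ge[OF s] s by (intro prod_mono) auto
  also have "\<dots> = prod ?w ?T * prod ?w ?F"
    by (simp add: F_eq_T prod.distrib[symmetric] end_weight_sq)
  also have "\<dots> = prod ?w (?T \<union> ?F) * prod ?w (?T \<inter> ?F)"
    using fin by (rule prod.union_inter[symmetric])
  also have "\<dots> \<le> prod ?w (?T \<union> ?F)"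
    using w_bounds by (intro mult_left_le prod_le_1 prod_nonneg) auto
  finally show ?thesis by (simp add: leaf_weight_def leaves)
qed

lemma amp_le_sum_leaf_weight:
  assumes s: "0 < s" "s < 1" and G: "is_graph n G"
  shows "amp (s ^ 4) r G
    \<le> ennreal ((1 - s ^ 4) ^ n) * (\<Sum>\<^sub>\<infinity>mo\<in>sym_admissible r G. ennreal (leaf_weight s r G mo))"
proof -
  have "(\<Sum>\<^sub>\<infinity>mo\<in>admissible r G. ennreal (\<Prod>x\<in>lvs G True. (s ^ 4) ^ smom r mo x))
      \<le> (\<Sum>\<^sub>\<infinity>mo\<in>sym_admissible r G. ennreal (leaf_weight s r G mo))"
    using admissible_subset_sym_admissible[OF G] leaf_power_le_leaf_weight[OF s G]
    by (intro infsum_mono_neutral) (auto intro: nonneg_summable_on_complete ennreal_leI)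
  moreover have "card (gV G) = n" using G by (simp add: is_graph_def)
  ultimately show ?thesis unfolding amp_def by (simp add: mult_left_mono)
qed

theorem lemma8:
  fixes p :: real and r n :: nat and G :: graph
  assumes "0 < p" "p < 1" "even n"
    and "is_graph n G" "melonic G"
  shows "amp p r G \<le> ennreal (4 ^ n * p powr (real r / 2))"
proof -
  define s where "s = root 4 p"
  have s: "0 < s" "s < 1" and p: "p = s ^ 4"
    using assms(1,2) by (simp_all add: s_def real_root_gt_zero)
  have "amp p r G \<le> ennreal ((1 - p) ^ n) * (\<Sum>\<^sub>\<infinity>mo\<in>sym_admissible r G. ennreal (leaf_weight s r G mo))"
    unfolding p by (rule amp_le_sum_leaf_weight[OF s assms(4)])
  also have "\<dots> \<le> ennreal ((1 - p) ^ n) * ennreal (vertex_factor s ^ n * edge_weight s r)"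
    using melonic_weight_bound[OF assms(5) s] assms(4)
    by (intro mult_left_mono) (simp_all add: weight_bound_def is_graph_def)
  also have "\<dots> = ennreal ((1 - p) ^ n * (vertex_factor s ^ n * edge_weight s r))"
    using assms(2) vertex_factor_nonneg[OF s] edge_weight_nonneg[OF s, of r]
    by (intro ennreal_mult[symmetric]) simp_all
  also have "\<dots> = ennreal (4 ^ n * edge_weight s r)"
    by (simp only: p vertex_factor_power_mult[OF s])
  also have "\<dots> \<le> ennreal (4 ^ n * p powr (real r / 2))"
    using edge_weight_le_powr[OF s, of r] by (simp add: p ennreal_leI)
  finally show ?thesis .
qed

end
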